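(* Fix $m\ge 2$. The receiver's optimal payoff over all protocols with $m$ memory states is \[ \sup_{\Pi} U^{R}(\Pi)= \begin{cases} 1-\dfrac{2\sqrt{p(1-p)\gamma^{m-2}}-1}{\gamma^{m-2}-1}, & \text{if } \gamma^{m-2}>\kappa,\\[1em] \max\{p,1-p\}, & \text{otherwise.} \end{cases} \] Furthermore, if $m\ge 4$ and $\gamma^{m-2}>\kappa$, there is no protocol $\Pi^*$ with $m$ memory states such that $U^R(\Pi^* )=\sup_{\Pi}U^R(\Pi)$.
   Context: Setting. The state of nature is $\theta\in\Theta=\{H,L\}$ with prior $\Pr(\theta=H)=p\in(0,1)$. A sender privately observes $\theta$; a receiver does not. $S$ is a finite signal set; conditional on $\theta$, signals are i.i.d. with distribution $\pi_\theta$ on $S$, where $\pi_\theta(s)>0$ for all $s\in S,\theta\in\Theta$, and $\pi_H\neq\pi_L$. The receiver has the set of memory states $M=\{1,\dots,m\}$ and chooses a protocol $\Pi=(f,g,a)$: a transition function $f:M\times S\to\Delta(M)$ ($f(i,s)(j)$ is the probability of moving from memory state $i$ to $j$ after signal $s$), an initial distribution $g\in\Delta(M)$ of $m_0$, and an action rule $a:M\to[0,1]$ (probability of action $H$ if the game ends in that memory state). A sender strategy is $\sigma:M\times\Theta\to[0,1]$, the probability of stopping in the current memory state given $\theta$. Timing: $m_0\sim g$; in each period $t=0,1,\dots$, with current memory state $m_t$, the game ends if $m_t$ is absorbing ($f(m_t,s)(m_t)=1$ for all $s$); otherwise the sender stops with probability $\sigma(m_t,\theta)$, ending the game; if not stopped,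 a signal $s_t\sim\pi_\theta$ is generated and $m_{t+1}\sim f(m_t,s_t)$. When the game ends in state $m_t$ the receiver takes action $H$ with probability $a(m_t)$ and $L$ otherwise. The receiver's payoff is $1$ if the action equals $\theta$ and $0$ otherwise; the sender's payoff is $1$ if the action is $H$ and $0$ otherwise; there is no discounting; if the game never ends both get $0$. $U^S(\Pi,\sigma),U^R(\Pi,\sigma)$ denote expected payoffs, $\mathrm{br}(\Pi)=\arg\sup_\sigma U^S(\Pi,\sigma)$ is the set of sender best responses, and $U^R(\Pi):=U^R(\Pi,\sigma)$, $U^S(\Pi):=U^S(\Pi,\sigma)$ for $\sigma\in\mathrm{br}(\Pi)$ (these do not depend on the choice of best response when the game ends with probability one). The supremum $\sup_\Pi$ is over all protocols on $M$. Signal informativeness: $\bar\ell=\max_{s\in S}\pi_H(s)/\pi_L(s)$, $\underline\ell=\min_{s\in S}\pi_H(s)/\pi_L(s)$, $\gamma=\bar\ell/\underline\ell\in(1,\infty)$. Prior skewness: $\kappa=\max\{p/(1-p),(1-p)/p\}$. *)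

theory Defs
  imports Complex_Main
begin

text \<open>Memory states are the naturals 1..m.
  Signals are the elements of a finite type 's.
  pi th s is the probability of signal s in state th.
  A protocol is (f, g, a): f i s j is the probability of moving from memory state i
  to memory state j after signal s; g is the initial distribution; a i is the
  probability of action H when the game ends in memory state i.
  A sender strategy sigma i th is the probability of stopping in memory state i given th.\<close>

datatype theta = H | L

definition valid_protocol ::
  "nat \<Rightarrow> (nat \<Rightarrow> 's \<Rightarrow> nat \<Rightarrow> real) \<Rightarrow> (nat \<Rightarrow> real) \<Rightarrow> (nat \<Rightarrow> real) \<Rightarrow> bool" where
  "valid_protocol m f g a \<longleftrightarrow>
     (\<forall>i\<in>{1..m}. \<forall>s. (\<forall>j\<in>{1..m}. 0 \<le> f i s j) \<and> (\<Sum>j\<in>{1..m}. f i s j) = 1) \<and>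
     (\<forall>i\<in>{1..m}. 0 \<le> g i) \<and> (\<Sum>i\<in>{1..m}. g i) = 1 \<and>
     (\<forall>i\<in>{1..m}. 0 \<le> a i \<and> a i \<le> 1)"

definition valid_strategy :: "nat \<Rightarrow> (nat \<Rightarrow> theta \<Rightarrow> real) \<Rightarrow> bool" where
  "valid_strategy m \<sigma> \<longleftrightarrow> (\<forall>i\<in>{1..m}. \<forall>th. 0 \<le> \<sigma> i th \<and> \<sigma> i th \<le> 1)"

definition absorbing :: "(nat \<Rightarrow> 's \<Rightarrow> nat \<Rightarrow> real) \<Rightarrow> nat \<Rightarrow> bool" where
  "absorbing f i \<longleftrightarrow> (\<forall>s. f i s i = 1)"

text \<open>endval m pi f sigma u th n x: expected value of u (end memory state), counting only
  plays that end in one of the periods 0..n-1, starting from memory state x in period 0,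
  given state of nature th.\<close>

fun endval ::
  "nat \<Rightarrow> (theta \<Rightarrow> 's::finite \<Rightarrow> real) \<Rightarrow> (nat \<Rightarrow> 's \<Rightarrow> nat \<Rightarrow> real) \<Rightarrow>
   (nat \<Rightarrow> theta \<Rightarrow> real) \<Rightarrow> (nat \<Rightarrow> real) \<Rightarrow> theta \<Rightarrow> nat \<Rightarrow> nat \<Rightarrow> real" where
  "endval m \<pi> f \<sigma> u th 0 x = 0"
| "endval m \<pi> f \<sigma> u th (Suc n) x =
     (if absorbing f x then u x
      else \<sigma> x th * u x +
           (1 - \<sigma> x th) * (\<Sum>s\<in>UNIV. \<pi> th s * (\<Sum>j\<in>{1..m}. f x s j * endval m \<pi> f \<sigma> u th n j)))"

text \<open>Expected value of u at the end of the game (0 if the game never ends), given th.\<close>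
definition payoff_theta ::
  "nat \<Rightarrow> (theta \<Rightarrow> 's::finite \<Rightarrow> real) \<Rightarrow> (nat \<Rightarrow> 's \<Rightarrow> nat \<Rightarrow> real) \<Rightarrow> (nat \<Rightarrow> real) \<Rightarrow>
   (nat \<Rightarrow> theta \<Rightarrow> real) \<Rightarrow> (nat \<Rightarrow> real) \<Rightarrow> theta \<Rightarrow> real" where
  "payoff_theta m \<pi> f g \<sigma> u th = (\<Sum>x\<in>{1..m}. g x * lim (\<lambda>n. endval m \<pi> f \<sigma> u th n x))"

definition US ::
  "nat \<Rightarrow> (theta \<Rightarrow> 's::finite \<Rightarrow> real) \<Rightarrow> real \<Rightarrow> (nat \<Rightarrow> 's \<Rightarrow> nat \<Rightarrow> real) \<Rightarrow> (nat \<Rightarrow> real) \<Rightarrow>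
   (nat \<Rightarrow> real) \<Rightarrow> (nat \<Rightarrow> theta \<Rightarrow> real) \<Rightarrow> real" where
  "US m \<pi> p f g a \<sigma> = p * payoff_theta m \<pi> f g \<sigma> a H + (1 - p) * payoff_theta m \<pi> f g \<sigma> a L"

definition UR ::
  "nat \<Rightarrow> (theta \<Rightarrow> 's::finite \<Rightarrow> real) \<Rightarrow> real \<Rightarrow> (nat \<Rightarrow> 's \<Rightarrow> nat \<Rightarrow> real) \<Rightarrow> (nat \<Rightarrow> real) \<Rightarrow>
   (nat \<Rightarrow> real) \<Rightarrow> (nat \<Rightarrow> theta \<Rightarrow> real) \<Rightarrow> real" where
  "UR m \<pi> p f g a \<sigma> = p * payoff_theta m \<pi> f g \<sigma> a H
                        + (1 - p) * payoff_theta m \<pi> f g \<sigma> (\<lambda>x. 1 - a x) L"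

definition br ::
  "nat \<Rightarrow> (theta \<Rightarrow> 's::finite \<Rightarrow> real) \<Rightarrow> real \<Rightarrow> (nat \<Rightarrow> 's \<Rightarrow> nat \<Rightarrow> real) \<Rightarrow> (nat \<Rightarrow> real) \<Rightarrow>
   (nat \<Rightarrow> real) \<Rightarrow> (nat \<Rightarrow> theta \<Rightarrow> real) set" where
  "br m \<pi> p f g a = {\<sigma>. valid_strategy m \<sigma> \<and>
       (\<forall>\<sigma>'. valid_strategy m \<sigma>' \<longrightarrow> US m \<pi> p f g a \<sigma>' \<le> US m \<pi> p f g a \<sigma>)}"

definition UR_values :: "nat \<Rightarrow> (theta \<Rightarrow> 's::finite \<Rightarrow> real) \<Rightarrow> real \<Rightarrow> real set" where
  "UR_values m \<pi> p = {UR m \<pi> p f g a \<sigma> | f g a \<sigma>.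
       valid_protocol m f g a \<and> \<sigma> \<in> br m \<pi> p f g a}"

definition lbar :: "(theta \<Rightarrow> 's::finite \<Rightarrow> real) \<Rightarrow> real" where
  "lbar \<pi> = Max (range (\<lambda>s. \<pi> H s / \<pi> L s))"

definition lunder :: "(theta \<Rightarrow> 's::finite \<Rightarrow> real) \<Rightarrow> real" where
  "lunder \<pi> = Min (range (\<lambda>s. \<pi> H s / \<pi> L s))"

definition gamma :: "(theta \<Rightarrow> 's::finite \<Rightarrow> real) \<Rightarrow> real" where
  "gamma \<pi> = lbar \<pi> / lunder \<pi>"

definition kappa :: "real \<Rightarrow> real" where
  "kappa p = max (p / (1 - p)) ((1 - p) / p)"

end

theory Submission
  imports Defs
begin

text \<open>Given a protocol and a sender best response, the low type gets at least the
  value \<open>v\<close> of its optimal stopping problem, an \<open>L\<close>-excessive function of the memory state.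
  Stretching the \<open>K \<le> m\<close> distinct values of \<open>v\<close> yields an \<open>H\<close>-excessive \<open>W \<ge> v\<close>, which
  bounds the payoff of the high type and whose odds exceed those of \<open>v\<close> by at most
  \<open>\<gamma> ^ (m - 2)\<close>. So the receiver gets a convex combination of terms \<open>p W + (1 - p) (1 - v)\<close>
  subject to \<open>W (1 - v) \<le> \<gamma> ^ (m - 2) v (1 - W)\<close>, whose maximum is the claimed bound; for
  \<open>m \<ge> 4\<close> the constraint is strict or degenerate in every state, so the bound is not attained.

  On a birth-death chain that moves only after the two extreme signals, with the
  low type stopping at once and the action tuned to make it indifferent, the receiver's payoff
  approaches the bound as the weights of the chain concentrate on its two ends.\<close>

section \<open>The pointwise bound\<close>

definition receiver_bound :: "real \<Rightarrow> real \<Rightarrow> real" where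
  "receiver_bound p c =
     (if c > kappa p then 1 - (2 * sqrt (p * (1 - p) * c) - 1) / (c - 1) else max p (1 - p))"

lemma kappa_ge_odds: "0 < p \<Longrightarrow> p < 1 \<Longrightarrow> p / (1 - p) \<le> kappa p \<and> (1 - p) / p \<le> kappa p"
  unfolding kappa_def by auto

lemma one_le_kappa: "0 < p \<Longrightarrow> p < 1 \<Longrightarrow> 1 \<le> kappa p"
  unfolding kappa_def by (cases "p \<le> 1/2") (auto simp: field_simps)

lemma receiver_bound_identity:
  fixes p c u w r :: real
  assumes p: "p \<noteq> 1" and r: "r\<^sup>2 = p * (1 - p) * c"
  defines "D \<equiv> 1 + (c - 1) * u"
  shows "(c - 1) * (p * w + (1 - p) * (1 - u)) * D + ((1 - p) * D - r)\<^sup>2 / (1 - p)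
           + (c - 1) * p * (c * u - w * D) = (c - 2 * r) * D"
proof -
  have "((1 - p) * D - r)\<^sup>2 = (1 - p) * ((1 - p) * D\<^sup>2 - 2 * r * D + p * c)"
    using r by (simp add: power2_eq_square algebra_simps)
  then have "((1 - p) * D - r)\<^sup>2 / (1 - p) = (1 - p) * D\<^sup>2 - 2 * r * D + p * c"
    using p by simp
  then show ?thesis unfolding D_def by (simp add: algebra_simps power2_eq_square)
qed

lemma extreme_not_tangent:
  assumes p: "0 < p" "p < 1" and c: "kappa p < c" and u: "u = 0 \<or> u = 1"
  shows "(1 - p) * (1 + (c - 1) * u) \<noteq> sqrt (p * (1 - p) * c)"
proof
  assume e: "(1 - p) * (1 + (c - 1) * u) = sqrt (p * (1 - p) * c)"
  have c1: "1 < c" using c one_le_kappa[OF p] by simp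
  have e2: "((1 - p) * (1 + (c - 1) * u))\<^sup>2 = p * (1 - p) * c"
    unfolding e using p c1 by simp
  from u show False
  proof
    assume "u = 0"
    then have "(1 - p) * (1 - p) = p * (1 - p) * c" using e2 by (simp add: power2_eq_square)
    then have "1 - p = p * c" using p by simp
    then have "c = (1 - p) / p" using p by (simp add: field_simps)
    then show False using kappa_ge_odds[OF p] c by auto
  next
    assume "u = 1"
    then have "((1 - p) * c) * ((1 - p) * c) = p * ((1 - p) * c)"
      using e2 by (simp add: power2_eq_square mult_ac)
    then have "(1 - p) * c = p" using p c1 by simp
    then have "c = p / (1 - p)" using p by (simp add: field_simps)
    then show False using kappa_ge_odds[OF p] c by auto
  qed
qed

text \<open>The bound is the maximum of the receiver's payoff \<open>p w + (1 - p)(1 - u)\<close> from a memory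
  state in which the two types end with action \<open>H\<close> with probabilities \<open>w\<close> and \<open>u\<close>, subject
  to the odds constraint; in the informative case it follows by completing the square.\<close>

lemma pointwise_bound_informative:
  fixes p c u w :: real
  assumes p: "0 < p" "p < 1" and c: "kappa p < c" and u: "0 \<le> u" "u \<le> 1"
    and odds: "w * (1 - u) \<le> c * u * (1 - w)"
  shows "p * w + (1 - p) * (1 - u) \<le> receiver_bound p c"
    and "w * (1 - u) < c * u * (1 - w) \<or> u = 0 \<or> u = 1 \<Longrightarrow>
           p * w + (1 - p) * (1 - u) < receiver_bound p c"
proof -
  define D where "D = 1 + (c - 1) * u"
  define r where "r = sqrt (p * (1 - p) * c)"
  define X where "X = p * w + (1 - p) * (1 - u)"
  have c1: "1 < c" using c one_le_kappa[OF p] by simp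
  have D: "0 < D" unfolding D_def using c1 u by (simp add: add_pos_nonneg)
  have wD: "w * D \<le> c * u" using odds unfolding D_def by (simp add: algebra_simps)
  have r2: "r\<^sup>2 = p * (1 - p) * c" unfolding r_def using p c1 by simp
  have B: "receiver_bound p c = 1 - (2 * r - 1) / (c - 1)"
    unfolding receiver_bound_def r_def using c by simp
  have eq: "(c - 1) * X * D + ((1 - p) * D - r)\<^sup>2 / (1 - p) + (c - 1) * p * (c * u - w * D)
              = (c - 2 * r) * D"
    unfolding X_def D_def using receiver_bound_identity[of p r c] p r2 by simp
  have sq: "0 \<le> ((1 - p) * D - r)\<^sup>2 / (1 - p)" using p by simp
  have slack: "0 \<le> (c - 1) * p * (c * u - w * D)" using c1 p wD by simp
  have "X \<le> receiver_bound p c \<longleftrightarrow> (c - 1) * X \<le> c - 2 * r"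
    "X < receiver_bound p c \<longleftrightarrow> (c - 1) * X < c - 2 * r"
    unfolding B using c1 by (simp_all add: field_simps)
  then have scale: "X \<le> receiver_bound p c \<longleftrightarrow> (c - 1) * X * D \<le> (c - 2 * r) * D"
    "X < receiver_bound p c \<longleftrightarrow> (c - 1) * X * D < (c - 2 * r) * D"
    using D by simp_all
  show "p * w + (1 - p) * (1 - u) \<le> receiver_bound p c"
    using eq sq slack scale(1) unfolding X_def by linarith
  assume strict: "w * (1 - u) < c * u * (1 - w) \<or> u = 0 \<or> u = 1"
  have "0 < ((1 - p) * D - r)\<^sup>2 / (1 - p) \<or> 0 < (c - 1) * p * (c * u - w * D)"
  proof (cases "w * (1 - u) < c * u * (1 - w)")
    case True
    then have "w * D < c * u" unfolding D_def by (simp add: algebra_simps)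
    then show ?thesis using c1 p by simp
  next
    case False
    then have "(1 - p) * D \<noteq> r" using strict extreme_not_tangent[OF p c] unfolding D_def r_def
      by blast
    then show ?thesis using p by simp
  qed
  then show "p * w + (1 - p) * (1 - u) < receiver_bound p c"
    using eq sq slack scale(2) unfolding X_def by linarith
qed

lemma pointwise_bound_uninformative:
  fixes p c u w :: real
  assumes p: "0 < p" "p < 1" and c: "c \<le> kappa p" "1 \<le> c" and u: "0 \<le> u" "u \<le> 1"
    and odds: "w * (1 - u) \<le> c * u * (1 - w)"
  shows "p * w + (1 - p) * (1 - u) \<le> max p (1 - p)"
proof -
  define D where "D = 1 + (c - 1) * u"
  have D1: "1 \<le> D" unfolding D_def using c u by simp
  have Dc: "D \<le> c" unfolding D_def using c u mult_left_mono[of u 1 "c - 1"] by simp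
  have "w * D \<le> c * u" using odds unfolding D_def by (simp add: algebra_simps)
  then have wD: "p * w * D \<le> p * c * u" using p by (simp add: mult.assoc mult_left_mono)
  have "c \<le> p / (1 - p) \<or> c \<le> (1 - p) / p" using c unfolding kappa_def by auto
  then show ?thesis
  proof
    assume "c \<le> p / (1 - p)"
    then have "(1 - p) * D \<le> p" using p Dc mult_left_mono[OF Dc, of "1 - p"]
      by (simp add: field_simps)
    then have "(1 - u) * ((1 - p) * D - p) \<le> 0" using u by (simp add: mult_nonneg_nonpos)
    then have "(p * w + (1 - p) * (1 - u)) * D \<le> p * D"
      using wD unfolding D_def by (simp add: algebra_simps)
    then show ?thesis using D1 by simp
  next
    assume "c \<le> (1 - p) / p"
    then have "p * c \<le> (1 - p) * D" using p D1 mult_left_mono[OF D1, of "1 - p"]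
      by (simp add: field_simps)
    then have "u * (p * c - (1 - p) * D) \<le> 0" using u by (simp add: mult_nonneg_nonpos)
    then have "(p * w + (1 - p) * (1 - u)) * D \<le> (1 - p) * D"
      using wD unfolding D_def by (simp add: algebra_simps)
    then show ?thesis using D1 by simp
  qed
qed

lemma pointwise_receiver_bound:
  fixes p c u w :: real
  assumes "0 < p" "p < 1" "1 \<le> c" "0 \<le> u" "u \<le> 1" "w * (1 - u) \<le> c * u * (1 - w)"
  shows "p * w + (1 - p) * (1 - u) \<le> receiver_bound p c"
  using pointwise_bound_informative(1)[of p c u w] pointwise_bound_uninformative[of p c u w] assms
  unfolding receiver_bound_def by (cases "kappa p < c") auto

text \<open>The bound is attained in the limit by chain protocols whose hitting-probability weights
  concentrate on the first and the last inner state, with ratio \<open>1 : \<rho>\<close>; the optimal \<open>\<rho>\<close>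
  makes \<open>(1 + \<rho> c) / (1 + \<rho>)\<close> equal to \<open>q = sqrt ((1 - p) c / p)\<close>.\<close>

lemma receiver_bound_two_point:
  fixes p c :: real
  assumes p: "0 < p" "p < 1" and ck: "kappa p < c"
  shows "\<exists>\<rho>>0. p / (1 + \<rho>) + (1 - p) * (1 - 1 / (1 + \<rho> * c)) = receiver_bound p c"
proof -
  have "p / (1 - p) < c" "(1 - p) / p < c" using ck kappa_ge_odds[OF p] by auto
  then have odds: "p < (1 - p) * c" "1 - p < p * c" using p by (simp_all add: field_simps)
  have c: "1 < c" using ck one_le_kappa[OF p] by simp
  define q where "q = sqrt ((1 - p) * c / p)"
  have q2: "q\<^sup>2 = (1 - p) * c / p" unfolding q_def using p c by simp
  have q1: "1 < q" unfolding q_def using odds p by (simp add: real_less_rsqrt)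
  have "(1 - p) * c < (p * c) * c" using odds(2) c by (intro mult_strict_right_mono) auto
  also have "\<dots> = c\<^sup>2 * p" by (simp add: power2_eq_square)
  finally have "(1 - p) * c / p < c\<^sup>2" using pos_divide_less_eq[OF p(1)] by blast
  then have "q\<^sup>2 < c\<^sup>2" using q2 by simp
  then have qc: "q < c" using c by (auto intro: power_less_imp_less_base)
  have qq: "(1 - p) * c = p * q * q" using q2 p by (simp add: field_simps power2_eq_square)
  have pq: "sqrt (p * (1 - p) * c) = p * q"
  proof -
    have "p * (1 - p) * c = (p * q)\<^sup>2" using qq by (simp add: power2_eq_square mult_ac)
    then show ?thesis using p q1 by simp
  qed
  define \<rho> where "\<rho> = (q - 1) / (c - q)"
  have \<rho>: "0 < \<rho>" unfolding \<rho>_def using q1 qc by simp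
  have nz: "c - 1 \<noteq> 0" "c - q \<noteq> 0" "q \<noteq> 0" using c qc q1 by auto
  have e1: "1 + \<rho> = (c - 1) / (c - q)" unfolding \<rho>_def using qc by (simp add: field_simps)
  have e2: "1 + \<rho> * c = q * (c - 1) / (c - q)" unfolding \<rho>_def using qc by (simp add: field_simps)
  have "(p * (c - q) * q + (1 - p) * (q * (c - 1) - (c - q)))
      = (q * (c - 1) - q * (2 * (p * q) - 1))"
    using qq by algebra
  moreover have "p / (1 + \<rho>) + (1 - p) * (1 - 1 / (1 + \<rho> * c))
      = (p * (c - q) * q + (1 - p) * (q * (c - 1) - (c - q))) / (q * (c - 1))"
  proof -
    have "p / (1 + \<rho>) = p * (c - q) * q / (q * (c - 1))" unfolding e1 using nz by simp
    moreover have "1 - 1 / (1 + \<rho> * c) = (q * (c - 1) - (c - q)) / (q * (c - 1))"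
      unfolding e2 using nz by (simp add: field_simps)
    ultimately show ?thesis by (simp add: add_divide_distrib)
  qed
  moreover have "1 - (2 * (p * q) - 1) / (c - 1)
      = (q * (c - 1) - q * (2 * (p * q) - 1)) / (q * (c - 1))"
    using nz by (simp add: field_simps)
  ultimately have "p / (1 + \<rho>) + (1 - p) * (1 - 1 / (1 + \<rho> * c)) = 1 - (2 * (p * q) - 1) / (c - 1)"
    by simp
  then show ?thesis unfolding receiver_bound_def pq using ck \<rho> by auto
qed

section \<open>Stretching an increasing grid\<close>

locale grid_stretch =
  fixes K :: nat and w :: "nat \<Rightarrow> real" and gm :: real
  assumes K1: "1 \<le> K"
    and wmono: "\<And>i j. i < j \<Longrightarrow> j < K \<Longrightarrow> w i < w j"
    and w0: "0 \<le> w 0" and w1: "w (K - 1) \<le> 1"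
    and gm: "1 < gm"
begin

definition gap_weight :: "nat \<Rightarrow> real" where "gap_weight k = gm ^ (K - 2 - k) * (w (Suc k) - w k)"
definition total_gap_weight :: real where "total_gap_weight = (\<Sum>k = 0..<K - 1. gap_weight k)"
definition scale :: real where "scale = (w (K - 1) - w 0) / total_gap_weight"
definition stretch :: "nat \<Rightarrow> real" where "stretch i = w 0 + scale * (\<Sum>k = 0..<i. gap_weight k)"

lemma gap_weight_pos: "Suc k < K \<Longrightarrow> 0 < gap_weight k"
  unfolding gap_weight_def using wmono[of k "Suc k"] gm by (intro mult_pos_pos) auto

lemma stretch_diff: "i \<le> j \<Longrightarrow> stretch j - stretch i = scale * (\<Sum>k = i..<j. gap_weight k)"
  unfolding stretch_def using sum_diff_nat_ivl[of 0 i j gap_weight] by (simp add: algebra_simps)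

lemma total_gap_weight_pos: "2 \<le> K \<Longrightarrow> 0 < total_gap_weight"
  unfolding total_gap_weight_def using gap_weight_pos by (intro sum_pos) auto

lemma grid_le: "i \<le> j \<Longrightarrow> j < K \<Longrightarrow> w i \<le> w j"
  using wmono[of i j] by (cases "i = j") auto

lemma scale_nonneg: "0 \<le> scale"
proof (cases "2 \<le> K")
  case True then show ?thesis unfolding scale_def
    using total_gap_weight_pos grid_le[of 0 "K - 1"] K1
    by (intro divide_nonneg_pos) auto
next
  case False then have "K = 1" using K1 by auto
  then show ?thesis unfolding scale_def total_gap_weight_def by simp
qed

lemma scale_pos: "2 \<le> K \<Longrightarrow> 0 < scale"
  unfolding scale_def using total_gap_weight_pos wmono[of 0 "K - 1"] by (intro divide_pos_pos) auto

lemma stretch_first: "stretch 0 = w 0" unfolding stretch_def by simp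

lemma stretch_last: "stretch (K - 1) = w (K - 1)"
proof (cases "2 \<le> K")
  case True
  have "stretch (K - 1) = w 0 + (w (K - 1) - w 0) / total_gap_weight * total_gap_weight"
    unfolding stretch_def scale_def total_gap_weight_def by simp
  also have "\<dots> = w (K - 1)" using total_gap_weight_pos[OF True] by simp
  finally show ?thesis .
next
  case False then have "K = 1" using K1 by auto
  then show ?thesis unfolding stretch_def by simp
qed

lemma stretch_increase_above:
  assumes ij: "i < j" "j < K"
  shows "stretch j - stretch i \<le> (scale * gm ^ (K - 1 - i) / gm) * (w j - w i)"
proof -
  have "(\<Sum>k = i..<j. gap_weight k) \<le> (\<Sum>k = i..<j. gm ^ (K - 2 - i) * (w (Suc k) - w k))"
  proof (intro sum_mono)
    fix k assume k: "k \<in> {i..<j}"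
    have "gm ^ (K - 2 - k) \<le> gm ^ (K - 2 - i)" using gm k by (intro power_increasing) auto
    moreover have "0 \<le> w (Suc k) - w k" using grid_le[of k "Suc k"] k ij by auto
    ultimately show "gap_weight k \<le> gm ^ (K - 2 - i) * (w (Suc k) - w k)" unfolding gap_weight_def
      by (intro mult_right_mono) auto
  qed
  also have "\<dots> = gm ^ (K - 2 - i) * (w j - w i)" using sum_Suc_diff'[of i j w] ij
    by (simp add: sum_distrib_left[symmetric])
  finally have A: "(\<Sum>k = i..<j. gap_weight k) \<le> gm ^ (K - 2 - i) * (w j - w i)" .
  have e: "gm ^ (K - 1 - i) = gm * gm ^ (K - 2 - i)"
  proof -
    have "K - 1 - i = Suc (K - 2 - i)" using ij by auto
    then show ?thesis by simp
  qed
  have "stretch j - stretch i = scale * (\<Sum>k = i..<j. gap_weight k)" using stretch_diff ij by simp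
  also have "\<dots> \<le> scale * (gm ^ (K - 2 - i) * (w j - w i))" using A scale_nonneg
    by (intro mult_left_mono) auto
  also have "\<dots> = (scale * gm ^ (K - 1 - i) / gm) * (w j - w i)" using e gm by simp
  finally show ?thesis .
qed

lemma stretch_increase_below:
  assumes ji: "j < i" "i < K"
  shows "scale * gm ^ (K - 1 - i) * (w i - w j) \<le> stretch i - stretch j"
proof -
  have "(\<Sum>k = j..<i. gm ^ (K - 1 - i) * (w (Suc k) - w k)) \<le> (\<Sum>k = j..<i. gap_weight k)"
  proof (intro sum_mono)
    fix k assume k: "k \<in> {j..<i}"
    have "gm ^ (K - 1 - i) \<le> gm ^ (K - 2 - k)" using gm k ji by (intro power_increasing) auto
    moreover have "0 \<le> w (Suc k) - w k" using grid_le[of k "Suc k"] k ji by auto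
    ultimately show "gm ^ (K - 1 - i) * (w (Suc k) - w k) \<le> gap_weight k" unfolding gap_weight_def
      by (intro mult_right_mono) auto
  qed
  moreover have "(\<Sum>k = j..<i. gm ^ (K - 1 - i) * (w (Suc k) - w k))
      = gm ^ (K - 1 - i) * (w i - w j)"
    using sum_Suc_diff'[of j i w] ji by (simp add: sum_distrib_left[symmetric])
  ultimately have A: "gm ^ (K - 1 - i) * (w i - w j) \<le> (\<Sum>k = j..<i. gap_weight k)" by simp
  have "scale * (gm ^ (K - 1 - i) * (w i - w j)) \<le> scale * (\<Sum>k = j..<i. gap_weight k)"
    using A scale_nonneg by (intro mult_left_mono) auto
  also have "\<dots> = stretch i - stretch j" using stretch_diff ji by simp
  finally show ?thesis by (simp add: mult.assoc)
qed

lemma stretch_mono: "i \<le> j \<Longrightarrow> j < K \<Longrightarrow> stretch i \<le> stretch j"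
proof -
  assume ij: "i \<le> j" "j < K"
  have "0 \<le> (\<Sum>k = i..<j. gap_weight k)" using gap_weight_pos ij
    by (intro sum_nonneg) (auto intro: less_imp_le)
  then have "0 \<le> scale * (\<Sum>k = i..<j. gap_weight k)" using scale_nonneg by simp
  then show ?thesis using stretch_diff[OF ij(1)] by simp
qed

lemma stretch_bounds: "i < K \<Longrightarrow> 0 \<le> stretch i \<and> stretch i \<le> 1"
proof -
  assume i: "i < K"
  then have i1: "i \<le> K - 1" by simp
  have "K - 1 < K" using K1 by simp
  then show ?thesis
    using stretch_mono[of 0 i] stretch_mono[OF i1] i stretch_first stretch_last w0 w1 by auto
qed

lemma grid_bounds: "i < K \<Longrightarrow> 0 \<le> w i \<and> w i \<le> 1"
proof -
  assume i: "i < K"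
  then have i1: "i \<le> K - 1" by simp
  have "K - 1 < K" using K1 by simp
  then show ?thesis using grid_le[of 0 i] grid_le[OF i1] i w0 w1 by auto
qed

lemma grid_le_stretch: assumes i: "i < K" shows "w i \<le> stretch i"
proof (cases "i = 0 \<or> i = K - 1")
  case True then show ?thesis using stretch_first stretch_last by auto
next
  case False
  then have i0: "0 < i" and i1: "i < K - 1" using i by auto
  define B where "B = scale * gm ^ (K - 1 - i)"
  define d1 where "d1 = w (K - 1) - w i"
  define d0 where "d0 = w i - w 0"
  have d1: "0 < d1" unfolding d1_def using wmono[of i "K - 1"] i1 by auto
  have d0: "0 < d0" unfolding d0_def using wmono[of 0 i] i0 i by auto
  have up: "w (K - 1) - stretch i \<le> (B / gm) * d1"
    using stretch_increase_above[of i "K - 1"] i1 stretch_last unfolding B_def d1_def by auto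
  have down: "B * d0 \<le> stretch i - w 0"
    using stretch_increase_below[of 0 i] i0 i stretch_first unfolding B_def d0_def by auto
  show ?thesis
  proof (rule ccontr)
    assume "\<not> w i \<le> stretch i"
    then have lt: "stretch i < w i" by simp
    have "1 < B / gm"
    proof (rule ccontr)
      assume "\<not> 1 < B / gm"
      then have "(B / gm) * d1 \<le> 1 * d1" using d1 by (intro mult_right_mono) auto
      then show False using up lt unfolding d1_def by auto
    qed
    then have "1 < B" using gm by (simp add: less_divide_eq)
    then have "1 * d0 < B * d0" using d0 by (intro mult_strict_right_mono) auto
    then show False using down lt unfolding d0_def by auto
  qed
qed

lemma gap_weight_prefix_le: "(\<Sum>k = 0..<i. gap_weight k) \<le> gm ^ (K - 2) * (w i - w 0)" if "i < K"
proof -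
  have "(\<Sum>k = 0..<i. gap_weight k) \<le> (\<Sum>k = 0..<i. gm ^ (K - 2) * (w (Suc k) - w k))"
  proof (intro sum_mono)
    fix k assume k: "k \<in> {0..<i}"
    have "gm ^ (K - 2 - k) \<le> gm ^ (K - 2)" using gm by (intro power_increasing) auto
    moreover have "0 \<le> w (Suc k) - w k" using grid_le[of k "Suc k"] k that by auto
    ultimately show "gap_weight k \<le> gm ^ (K - 2) * (w (Suc k) - w k)" unfolding gap_weight_def
      by (intro mult_right_mono) auto
  qed
  also have "\<dots> = gm ^ (K - 2) * (w i - w 0)" using sum_Suc_diff'[of 0 i w]
    by (simp add: sum_distrib_left[symmetric])
  finally show ?thesis .
qed

lemma gap_weight_prefix_less: "(\<Sum>k = 0..<i. gap_weight k) < gm ^ (K - 2) * (w i - w 0)"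
  if "i < K" "2 \<le> i"
proof -
  have "(\<Sum>k = 0..<i. gap_weight k) < (\<Sum>k = 0..<i. gm ^ (K - 2) * (w (Suc k) - w k))"
  proof (intro sum_strict_mono_ex1 ballI)
    fix k assume k: "k \<in> {0..<i}"
    have "gm ^ (K - 2 - k) \<le> gm ^ (K - 2)" using gm by (intro power_increasing) auto
    moreover have "0 \<le> w (Suc k) - w k" using grid_le[of k "Suc k"] k that by auto
    ultimately show "gap_weight k \<le> gm ^ (K - 2) * (w (Suc k) - w k)" unfolding gap_weight_def
      by (intro mult_right_mono) auto
  next
    have "gm ^ (K - 2 - 1) < gm ^ (K - 2)" using gm that by (intro power_strict_increasing) auto
    moreover have "0 < w (Suc 1) - w 1" using wmono[of 1 "Suc 1"] that by auto
    ultimately have "gap_weight 1 < gm ^ (K - 2) * (w (Suc 1) - w 1)" unfolding gap_weight_def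
      by (intro mult_strict_right_mono) auto
    then show "\<exists>k\<in>{0..<i}. gap_weight k < gm ^ (K - 2) * (w (Suc k) - w k)" using that
      by (intro bexI[of _ 1]) auto
  qed simp
  also have "\<dots> = gm ^ (K - 2) * (w i - w 0)" using sum_Suc_diff'[of 0 i w]
    by (simp add: sum_distrib_left[symmetric])
  finally show ?thesis .
qed

lemma gap_weight_suffix_ge: "w (K - 1) - w i \<le> (\<Sum>k = i..<K - 1. gap_weight k)" if "i < K"
proof -
  have "(\<Sum>k = i..<K - 1. w (Suc k) - w k) \<le> (\<Sum>k = i..<K - 1. gap_weight k)"
  proof (intro sum_mono)
    fix k assume k: "k \<in> {i..<K - 1}"
    have "1 \<le> gm ^ (K - 2 - k)" using gm by (intro one_le_power) auto
    moreover have "0 \<le> w (Suc k) - w k" using grid_le[of k "Suc k"] k that by auto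
    ultimately show "w (Suc k) - w k \<le> gap_weight k" unfolding gap_weight_def
      using mult_right_mono[of 1 "gm ^ (K - 2 - k)" "w (Suc k) - w k"] by auto
  qed
  then show ?thesis using sum_Suc_diff'[of i "K - 1" w] that by simp
qed

lemma gap_weight_suffix_greater: "w (K - 1) - w 1 < (\<Sum>k = 1..<K - 1. gap_weight k)" if "4 \<le> K"
proof -
  have "(\<Sum>k = 1..<K - 1. w (Suc k) - w k) < (\<Sum>k = 1..<K - 1. gap_weight k)"
  proof (intro sum_strict_mono_ex1 ballI)
    fix k assume k: "k \<in> {1..<K - 1}"
    have "1 \<le> gm ^ (K - 2 - k)" using gm by (intro one_le_power) auto
    moreover have "0 \<le> w (Suc k) - w k" using grid_le[of k "Suc k"] k that by auto
    ultimately show "w (Suc k) - w k \<le> gap_weight k" unfolding gap_weight_def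
      using mult_right_mono[of 1 "gm ^ (K - 2 - k)" "w (Suc k) - w k"] by auto
  next
    have "gm ^ 0 < gm ^ (K - 2 - 1)" using gm that by (intro power_strict_increasing) auto
    moreover have "0 < w (Suc 1) - w 1" using wmono[of 1 "Suc 1"] that by auto
    ultimately have "1 * (w (Suc 1) - w 1) < gap_weight 1" unfolding gap_weight_def
      by (intro mult_strict_right_mono) auto
    then show "\<exists>k\<in>{1..<K - 1}. w (Suc k) - w k < gap_weight k" using that
      by (intro bexI[of _ 1]) auto
  qed simp
  then show ?thesis using sum_Suc_diff'[of 1 "K - 1" w] that by simp
qed

lemma stretch_odds_factors:
  assumes i: "0 < i" "i < K - 1"
    and dn: "stretch i - w 0 \<le> scale * gm ^ (K - 2) * (w i - w 0)"
    and upb: "scale * (w (K - 1) - w i) \<le> w (K - 1) - stretch i"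
  shows "stretch i \<le> scale * gm ^ (K - 2) * w i" "scale * (1 - w i) \<le> 1 - stretch i"
    and "1 \<le> scale * gm ^ (K - 2)" "scale \<le> 1"
proof -
  define X where "X = scale * gm ^ (K - 2)"
  have iK: "i < K" using i by auto
  have wi: "w 0 < w i" "w i < w (K - 1)" using wmono[of 0 i] wmono[of i "K - 1"] i by auto
  have ge: "w i \<le> stretch i" using grid_le_stretch[OF iK] .
  show X1: "1 \<le> scale * gm ^ (K - 2)" unfolding X_def[symmetric]
  proof (rule ccontr)
    assume "\<not> 1 \<le> X"
    then have "X * (w i - w 0) < 1 * (w i - w 0)" using wi by (intro mult_strict_right_mono) auto
    then show False using dn ge unfolding X_def by auto
  qed
  show s1: "scale \<le> 1"
  proof (rule ccontr)
    assume "\<not> scale \<le> 1"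
    then have "1 * (w (K - 1) - w i) < scale * (w (K - 1) - w i)" using wi
      by (intro mult_strict_right_mono) auto
    then show False using upb ge by auto
  qed
  have "(X - 1) * w 0 \<ge> 0" using X1 w0 unfolding X_def by auto
  then show "stretch i \<le> scale * gm ^ (K - 2) * w i" using dn unfolding X_def
    by (simp add: algebra_simps)
  have "(1 - scale) * (1 - w (K - 1)) \<ge> 0" using s1 w1 by auto
  then show "scale * (1 - w i) \<le> 1 - stretch i" using upb by (simp add: algebra_simps)
qed

lemma stretch_prefix_bound: "i < K \<Longrightarrow> stretch i - w 0 \<le> scale * gm ^ (K - 2) * (w i - w 0)"
  using mult_left_mono[OF gap_weight_prefix_le scale_nonneg] unfolding stretch_def
    by (simp add: mult.assoc)

lemma stretch_suffix_bound: "i < K \<Longrightarrow> scale * (w (K - 1) - w i) \<le> w (K - 1) - stretch i"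
proof -
  assume i: "i < K"
  have "scale * (w (K - 1) - w i) \<le> scale * (\<Sum>k = i..<K - 1. gap_weight k)"
    using gap_weight_suffix_ge[OF i] scale_nonneg by (intro mult_left_mono) auto
  also have "\<dots> = stretch (K - 1) - stretch i" using stretch_diff[of i "K - 1"] i by simp
  finally show ?thesis using stretch_last by simp
qed

lemma stretch_odds_le: assumes i: "i < K"
  shows "stretch i * (1 - w i) \<le> gm ^ (K - 2) * w i * (1 - stretch i)"
proof (cases "i = 0 \<or> i = K - 1")
  case True
  then have e: "stretch i = w i" using stretch_first stretch_last by auto
  have wb: "0 \<le> w i" "w i \<le> 1" using grid_bounds[OF i] by auto
  have "0 \<le> w i * (1 - w i)" using wb by auto
  moreover have "1 \<le> gm ^ (K - 2)" using gm by (intro one_le_power) auto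
  ultimately have "1 * (w i * (1 - w i)) \<le> gm ^ (K - 2) * (w i * (1 - w i))"
    by (intro mult_right_mono) auto
  then show ?thesis using e by (simp add: mult.assoc)
next
  case False
  then have i0: "0 < i" and i1: "i < K - 1" using i by auto
  note o = stretch_odds_factors[OF i0 i1 stretch_prefix_bound[OF i] stretch_suffix_bound[OF i]]
  have wb: "0 \<le> w i" "w i \<le> 1" using grid_bounds[OF i] by auto
  have "stretch i * (1 - w i) \<le> (scale * gm ^ (K - 2) * w i) * (1 - w i)" using o(1) wb
    by (intro mult_right_mono) auto
  also have "\<dots> = gm ^ (K - 2) * w i * (scale * (1 - w i))" by (simp add: algebra_simps)
  also have "\<dots> \<le> gm ^ (K - 2) * w i * (1 - stretch i)" using o(2) wb gm
    by (intro mult_left_mono) auto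
  finally show ?thesis .
qed

lemma stretch_lower_factor_less:
  assumes i: "2 \<le> i" "i < K - 1"
  shows "stretch i < scale * gm ^ (K - 2) * w i"
proof -
  have iK: "i < K" and K: "4 \<le> K" using i by auto
  have "scale * (\<Sum>k = 0..<i. gap_weight k) < scale * (gm ^ (K - 2) * (w i - w 0))"
    using gap_weight_prefix_less[OF iK i(1)] scale_pos K by (intro mult_strict_left_mono) auto
  then have "stretch i - w 0 < scale * gm ^ (K - 2) * (w i - w 0)"
    unfolding stretch_def by (simp add: mult.assoc)
  moreover have "0 \<le> (scale * gm ^ (K - 2) - 1) * w 0"
    using stretch_odds_factors(3)[OF _ i(2) stretch_prefix_bound[OF iK] stretch_suffix_bound[OF iK]]
      i w0
    by simp
  ultimately show ?thesis by (simp add: algebra_simps)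
qed

lemma stretch_upper_factor_less:
  assumes K: "4 \<le> K"
  shows "scale * (1 - w 1) < 1 - stretch 1"
proof -
  have "scale * (w (K - 1) - w 1) < scale * (\<Sum>k = 1..<K - 1. gap_weight k)"
    using gap_weight_suffix_greater[OF K] scale_pos K by (intro mult_strict_left_mono) auto
  also have "\<dots> = w (K - 1) - stretch 1" using stretch_diff[of 1 "K - 1"] stretch_last K by simp
  finally have "scale * (w (K - 1) - w 1) < w (K - 1) - stretch 1" .
  moreover have "scale \<le> 1"
    using stretch_odds_factors(4)[of 1] stretch_prefix_bound[of 1] stretch_suffix_bound[of 1] K
      by simp
  then have "0 \<le> (1 - scale) * (1 - w (K - 1))" using w1 by simp
  ultimately show ?thesis by (simp add: algebra_simps)
qed

text \<open>Strictness needs \<open>K \<ge> 4\<close>: the lower factor is strict from the third grid point on, the upper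
  one at the second.\<close>

lemma stretch_odds_less:
  assumes K: "4 \<le> K" and i: "0 < i" "i < K - 1"
  shows "stretch i * (1 - w i) < gm ^ (K - 2) * w i * (1 - stretch i)"
proof -
  have iK: "i < K" using i by auto
  note factors = stretch_odds_factors[OF i stretch_prefix_bound[OF iK] stretch_suffix_bound[OF iK]]
  have wi: "0 < w i" "w i < 1" using wmono[of 0 i] wmono[of i "K - 1"] i iK w0 w1 by auto
  have gp: "0 < gm ^ (K - 2)" using gm by simp
  have "stretch i * (1 - w i) \<le> (scale * gm ^ (K - 2) * w i) * (1 - w i)"
    using factors(1) wi by (intro mult_right_mono) auto
  also have "\<dots> = gm ^ (K - 2) * w i * (scale * (1 - w i))" by (simp add: algebra_simps)
  also have "\<dots> \<le> gm ^ (K - 2) * w i * (1 - stretch i)"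
    using factors(2) wi gp by (intro mult_left_mono) auto
  finally have le: "stretch i * (1 - w i) \<le> gm ^ (K - 2) * w i * (1 - stretch i)" .
  show ?thesis
  proof (cases "i = 1")
    case True
    have "gm ^ (K - 2) * w i * (scale * (1 - w i)) < gm ^ (K - 2) * w i * (1 - stretch i)"
      using stretch_upper_factor_less[OF K] True wi gp by (intro mult_strict_left_mono) auto
    moreover have "stretch i * (1 - w i) \<le> (scale * gm ^ (K - 2) * w i) * (1 - w i)"
      using factors(1) wi by (intro mult_right_mono) auto
    ultimately show ?thesis by (simp add: algebra_simps)
  next
    case False
    then have "stretch i * (1 - w i) < (scale * gm ^ (K - 2) * w i) * (1 - w i)"
      using stretch_lower_factor_less[of i] i wi by (intro mult_strict_right_mono) auto
    moreover have "(scale * gm ^ (K - 2) * w i) * (1 - w i) \<le> gm ^ (K - 2) * w i * (1 - stretch i)"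
      using factors(2) wi gp
        mult_left_mono[of "scale * (1 - w i)" "1 - stretch i" "gm ^ (K - 2) * w i"]
      by (simp add: algebra_simps)
    ultimately show ?thesis by linarith
  qed
qed

lemma stretch_properties:
  assumes i: "i < K"
  shows "w i \<le> stretch i \<and> stretch i \<le> 1
    \<and> stretch i * (1 - w i) \<le> gm ^ (K - 2) * w i * (1 - stretch i)
    \<and> (stretch i = w i \<or> (4 \<le> K \<longrightarrow> stretch i * (1 - w i) < gm ^ (K - 2) * w i * (1 - stretch i)))"
proof -
  have "stretch i = w i \<or> (4 \<le> K \<longrightarrow> stretch i * (1 - w i) < gm ^ (K - 2) * w i * (1 - stretch i))"
  proof (cases "i = 0 \<or> i = K - 1")
    case True then show ?thesis using stretch_first stretch_last by auto
  next
    case False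
    then have "0 < i" "i < K - 1" using i by auto
    then show ?thesis using stretch_odds_less[of i] by auto
  qed
  then show ?thesis using grid_le_stretch[OF i] stretch_bounds[OF i] stretch_odds_le[OF i] by simp
qed

text \<open>With \<open>gm\<close> the ratio of the largest to the smallest likelihood ratio, the increments of the
  stretch are controlled by those of the grid; this turns excessivity for the low type into
  excessivity for the high type.\<close>

lemma stretch_increment_le:
  assumes i: "i < K" and k: "k < K" and lo: "0 < lo" and pl: "0 \<le> pl"
    and ph: "lo * pl \<le> ph" "ph \<le> gm * lo * pl"
  shows "ph * (stretch k - stretch i) \<le> lo * (scale * gm ^ (K - 1 - i)) * (pl * (w k - w i))"
proof -
  define B where "B = scale * gm ^ (K - 1 - i)"
  have B: "0 \<le> B" unfolding B_def using scale_nonneg gm by simp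
  have ph0: "0 \<le> ph" using ph(1) lo pl by (meson mult_nonneg_nonneg less_imp_le order_trans)
  consider "i < k" | "k = i" | "k < i" by linarith
  then show ?thesis
  proof cases
    case 1
    have e: "0 \<le> w k - w i" using wmono[OF 1 k] by simp
    have "ph * (stretch k - stretch i) \<le> ph * ((B / gm) * (w k - w i))"
      using stretch_increase_above[OF 1 k] ph0 unfolding B_def by (intro mult_left_mono) auto
    also have "\<dots> \<le> (gm * lo * pl) * ((B / gm) * (w k - w i))"
      using ph(2) e B gm by (intro mult_right_mono) auto
    also have "\<dots> = lo * B * (pl * (w k - w i))" using gm by (simp add: field_simps)
    finally show ?thesis unfolding B_def .
  next
    case 2 then show ?thesis by simp
  next
    case 3
    have neg: "B * (w k - w i) \<le> 0" using wmono[OF 3 i] B by (simp add: mult_nonneg_nonpos)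
    have "ph * (stretch k - stretch i) \<le> ph * (B * (w k - w i))"
      using stretch_increase_below[OF 3 i] ph0 unfolding B_def
      by (intro mult_left_mono) (auto simp: algebra_simps)
    also have "\<dots> \<le> (lo * pl) * (B * (w k - w i))"
      using ph(1) neg by (intro mult_right_mono_neg) auto
    also have "\<dots> = lo * B * (pl * (w k - w i))" by (simp add: algebra_simps)
    finally show ?thesis unfolding B_def .
  qed
qed

end

section \<open>Stopping problems on a memory chain\<close>

definition trans_prob ::
  "(theta \<Rightarrow> 's::finite \<Rightarrow> real) \<Rightarrow> (nat \<Rightarrow> 's \<Rightarrow> nat \<Rightarrow> real) \<Rightarrow>
   theta \<Rightarrow> nat \<Rightarrow> nat \<Rightarrow> real" where
  "trans_prob \<pi> f th x j = (\<Sum>s\<in>UNIV. \<pi> th s * f x s j)"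

fun snell_iter ::
  "nat \<Rightarrow> (theta \<Rightarrow> 's::finite \<Rightarrow> real) \<Rightarrow> (nat \<Rightarrow> 's \<Rightarrow> nat \<Rightarrow> real) \<Rightarrow> (nat \<Rightarrow> real) \<Rightarrow>
   theta \<Rightarrow> nat \<Rightarrow> nat \<Rightarrow> real" where
  "snell_iter m \<pi> f a th 0 x = 0"
| "snell_iter m \<pi> f a th (Suc n) x =
     (if absorbing f x then a x
      else max (a x) (\<Sum>j\<in>{1..m}. trans_prob \<pi> f th x j * snell_iter m \<pi> f a th n j))"

locale memory_chain =
  fixes m :: nat and \<pi> :: "theta \<Rightarrow> 's::finite \<Rightarrow> real" and f :: "nat \<Rightarrow> 's \<Rightarrow> nat \<Rightarrow> real"
  assumes pi_pos: "\<And>th s. 0 < \<pi> th s"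
    and pi_sum: "\<And>th. (\<Sum>s\<in>UNIV. \<pi> th s) = 1"
    and f_nonneg: "\<And>i s j. i \<in> {1..m} \<Longrightarrow> j \<in> {1..m} \<Longrightarrow> 0 \<le> f i s j"
    and f_sum: "\<And>i s. i \<in> {1..m} \<Longrightarrow> (\<Sum>j\<in>{1..m}. f i s j) = 1"
begin

abbreviation "P \<equiv> trans_prob \<pi> f"

lemma trans_prob_nonneg: "x \<in> {1..m} \<Longrightarrow> j \<in> {1..m} \<Longrightarrow> 0 \<le> P th x j"
  unfolding trans_prob_def
    by (intro sum_nonneg mult_nonneg_nonneg) (auto intro: less_imp_le pi_pos f_nonneg)

lemma trans_prob_sum: "x \<in> {1..m} \<Longrightarrow> (\<Sum>j\<in>{1..m}. P th x j) = 1"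
proof -
  assume x: "x \<in> {1..m}"
  have "(\<Sum>j\<in>{1..m}. P th x j) = (\<Sum>j\<in>{1..m}. \<Sum>s\<in>UNIV. \<pi> th s * f x s j)"
    unfolding trans_prob_def ..
  also have "\<dots> = (\<Sum>s\<in>UNIV. \<Sum>j\<in>{1..m}. \<pi> th s * f x s j)" by (rule sum.swap)
  also have "\<dots> = (\<Sum>s\<in>UNIV. \<pi> th s * (\<Sum>j\<in>{1..m}. f x s j))"
    by (simp add: sum_distrib_left)
  also have "\<dots> = 1" using f_sum[OF x] pi_sum by simp
  finally show ?thesis .
qed

lemma sum_signals_trans_prob: "(\<Sum>s\<in>UNIV. \<pi> th s * (\<Sum>j\<in>{1..m}. f x s j * h j))
    = (\<Sum>j\<in>{1..m}. P th x j * h j)"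
proof -
  have "(\<Sum>s\<in>UNIV. \<pi> th s * (\<Sum>j\<in>{1..m}. f x s j * h j))
      = (\<Sum>s\<in>UNIV. \<Sum>j\<in>{1..m}. \<pi> th s * f x s j * h j)"
    by (simp add: sum_distrib_left mult.assoc)
  also have "\<dots> = (\<Sum>j\<in>{1..m}. \<Sum>s\<in>UNIV. \<pi> th s * f x s j * h j)" by (rule sum.swap)
  also have "\<dots> = (\<Sum>j\<in>{1..m}. P th x j * h j)"
    unfolding trans_prob_def by (simp add: sum_distrib_right)
  finally show ?thesis .
qed

lemma endval_Suc_trans_prob: "endval m \<pi> f \<sigma> u th (Suc n) x =
     (if absorbing f x then u x
      else \<sigma> x th * u x + (1 - \<sigma> x th) * (\<Sum>j\<in>{1..m}. P th x j * endval m \<pi> f \<sigma> u th n j))"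
  by (simp only: endval.simps(2) sum_signals_trans_prob)

lemma likelihood_ratio_le_lbar: "\<pi> H s / \<pi> L s \<le> lbar \<pi>"
  unfolding lbar_def by (rule Max_ge) auto

lemma lunder_le_likelihood_ratio: "lunder \<pi> \<le> \<pi> H s / \<pi> L s"
  unfolding lunder_def by (rule Min_le) auto

lemma trans_prob_H_le: "x \<in> {1..m} \<Longrightarrow> j \<in> {1..m} \<Longrightarrow> P H x j \<le> lbar \<pi> * P L x j"
proof -
  assume x: "x \<in> {1..m}" and j: "j \<in> {1..m}"
  have "P H x j = (\<Sum>s\<in>UNIV. (\<pi> H s / \<pi> L s) * (\<pi> L s * f x s j))"
    unfolding trans_prob_def using pi_pos
      by (intro sum.cong) (auto simp: field_simps less_imp_neq[symmetric])
  also have "\<dots> \<le> (\<Sum>s\<in>UNIV. lbar \<pi> * (\<pi> L s * f x s j))"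
    by (intro sum_mono mult_right_mono likelihood_ratio_le_lbar mult_nonneg_nonneg f_nonneg[OF x j])
      (auto intro: less_imp_le pi_pos)
  also have "\<dots> = lbar \<pi> * P L x j" unfolding trans_prob_def by (simp add: sum_distrib_left)
  finally show ?thesis .
qed

lemma trans_prob_H_ge: "x \<in> {1..m} \<Longrightarrow> j \<in> {1..m} \<Longrightarrow> lunder \<pi> * P L x j \<le> P H x j"
proof -
  assume x: "x \<in> {1..m}" and j: "j \<in> {1..m}"
  have "lunder \<pi> * P L x j = (\<Sum>s\<in>UNIV. lunder \<pi> * (\<pi> L s * f x s j))"
    unfolding trans_prob_def by (simp add: sum_distrib_left)
  also have "\<dots> \<le> (\<Sum>s\<in>UNIV. (\<pi> H s / \<pi> L s) * (\<pi> L s * f x s j))"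
    by (intro sum_mono mult_right_mono lunder_le_likelihood_ratio mult_nonneg_nonneg f_nonneg[OF x j])
      (auto intro: less_imp_le pi_pos)
  also have "\<dots> = P H x j"
    unfolding trans_prob_def using pi_pos
      by (intro sum.cong) (auto simp: field_simps less_imp_neq[symmetric])
  finally show ?thesis .
qed

definition closed_class :: "theta \<Rightarrow> nat set \<Rightarrow> bool" where
  "closed_class th Z \<longleftrightarrow> (\<forall>x\<in>Z. \<forall>j\<in>{1..m}. 0 < P th x j \<longrightarrow> j \<in> Z)"

lemma argmax_closed_class:
  assumes Z: "Z \<subseteq> {1..m}" "Z \<noteq> {}" "closed_class th Z"
    and sub: "\<And>x. x \<in> Z \<Longrightarrow> \<psi> x = Max (\<psi> ` Z) \<Longrightarrow> \<psi> x \<le> (\<Sum>j\<in>{1..m}. P th x j * \<psi> j)"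
  shows "{x\<in>Z. \<psi> x = Max (\<psi> ` Z)} \<noteq> {}" "closed_class th {x\<in>Z. \<psi> x = Max (\<psi> ` Z)}"
proof -
  have finZ: "finite Z" using Z(1) finite_subset by blast
  define M where "M = Max (\<psi> ` Z)"
  have le: "\<psi> j \<le> M" if "j \<in> Z" for j unfolding M_def using finZ that by auto
  have "M \<in> \<psi> ` Z" unfolding M_def using finZ Z(2) by (intro Max_in) auto
  then show "{x\<in>Z. \<psi> x = Max (\<psi> ` Z)} \<noteq> {}" unfolding M_def by auto
  show "closed_class th {x\<in>Z. \<psi> x = Max (\<psi> ` Z)}"
    unfolding closed_class_def
  proof (intro ballI impI)
    fix x j assume x: "x \<in> {x\<in>Z. \<psi> x = Max (\<psi> ` Z)}" and j: "j \<in> {1..m}" and pj: "0 < P th x j"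
    have xZ: "x \<in> Z" and xM: "\<psi> x = M" using x unfolding M_def by auto
    have xm: "x \<in> {1..m}" using xZ Z(1) by auto
    have out0: "P th x k = 0" if "k \<in> {1..m} - Z" for k
    proof -
      have "\<not> 0 < P th x k" using Z(3) xZ that unfolding closed_class_def by auto
      thus ?thesis using trans_prob_nonneg[OF xm, of k th] that by auto
    qed
    have s1: "(\<Sum>k\<in>{1..m}. P th x k * \<psi> k) = (\<Sum>k\<in>Z. P th x k * \<psi> k)"
      using out0 Z(1) by (intro sum.mono_neutral_right) auto
    have s2: "(\<Sum>k\<in>Z. P th x k) = 1"
      using trans_prob_sum[OF xm, of th] out0 Z(1) sum.mono_neutral_right[of "{1..m}" Z "P th x"]
        by auto
    have "(\<Sum>k\<in>Z. P th x k * (M - \<psi> k)) = M * (\<Sum>k\<in>Z. P th x k) - (\<Sum>k\<in>Z. P th x k * \<psi> k)"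
      by (simp add: algebra_simps sum_subtractf sum_distrib_left)
    also have "\<dots> \<le> 0" using s1 s2 sub[OF xZ] xM unfolding M_def by simp
    finally have "(\<Sum>k\<in>Z. P th x k * (M - \<psi> k)) \<le> 0" .
    moreover have nn: "\<forall>k\<in>Z. 0 \<le> P th x k * (M - \<psi> k)"
      using le trans_prob_nonneg[OF xm] Z(1) by (auto intro!: mult_nonneg_nonneg)
    moreover have "0 \<le> (\<Sum>k\<in>Z. P th x k * (M - \<psi> k))"
      using nn by (intro sum_nonneg) auto
    ultimately have "(\<Sum>k\<in>Z. P th x k * (M - \<psi> k)) = 0"
      by linarith
    then have "\<forall>k\<in>Z. P th x k * (M - \<psi> k) = 0"
      using sum_nonneg_eq_0_iff[OF finZ, of "\<lambda>k. P th x k * (M - \<psi> k)"] nn by simp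
    moreover have jZ: "j \<in> Z"
    proof (rule ccontr)
      assume "j \<notin> Z" thus False using out0[of j] j pj by auto
    qed
    ultimately have "\<psi> j = M" using pj by auto
    then show "j \<in> {x\<in>Z. \<psi> x = Max (\<psi> ` Z)}" using jZ unfolding M_def by auto
  qed
qed

lemma trans_prob_average_bounds:
  assumes x: "x \<in> {1..m}" and h: "\<And>j. j \<in> {1..m} \<Longrightarrow> 0 \<le> h j \<and> h j \<le> 1"
  shows "0 \<le> (\<Sum>j\<in>{1..m}. P th x j * h j)" "(\<Sum>j\<in>{1..m}. P th x j * h j) \<le> 1"
proof -
  show "0 \<le> (\<Sum>j\<in>{1..m}. P th x j * h j)"
    using h trans_prob_nonneg[OF x] by (intro sum_nonneg mult_nonneg_nonneg) auto
  have "(\<Sum>j\<in>{1..m}. P th x j * h j) \<le> (\<Sum>j\<in>{1..m}. P th x j * 1)"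
    using h trans_prob_nonneg[OF x] by (intro sum_mono mult_left_mono) auto
  then show "(\<Sum>j\<in>{1..m}. P th x j * h j) \<le> 1" using trans_prob_sum[OF x] by simp
qed

definition payoff_from :: "(nat \<Rightarrow> theta \<Rightarrow> real) \<Rightarrow> (nat \<Rightarrow> real) \<Rightarrow> theta \<Rightarrow> nat \<Rightarrow> real" where
  "payoff_from \<sigma> u th x = lim (\<lambda>n. endval m \<pi> f \<sigma> u th n x)"

declare endval.simps(2)[simp del]
declare endval_Suc_trans_prob[simp]

context
  fixes \<sigma> :: "nat \<Rightarrow> theta \<Rightarrow> real" and u :: "nat \<Rightarrow> real"
  assumes \<sigma>: "valid_strategy m \<sigma>" and u: "\<And>x. x \<in> {1..m} \<Longrightarrow> 0 \<le> u x \<and> u x \<le> 1"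
begin

lemma endval_bounds:
  shows "x \<in> {1..m} \<Longrightarrow> 0 \<le> endval m \<pi> f \<sigma> u th n x \<and> endval m \<pi> f \<sigma> u th n x \<le> 1"
proof (induction n arbitrary: x)
  case 0 then show ?case by simp
next
  case (Suc n)
  have s: "0 \<le> \<sigma> x th" "\<sigma> x th \<le> 1" using \<sigma> Suc.prems unfolding valid_strategy_def by auto
  have b: "0 \<le> (\<Sum>j\<in>{1..m}. P th x j * endval m \<pi> f \<sigma> u th n j)"
          "(\<Sum>j\<in>{1..m}. P th x j * endval m \<pi> f \<sigma> u th n j) \<le> 1"
    using trans_prob_average_bounds[OF Suc.prems Suc.IH] by auto
  have u0: "0 \<le> u x" "u x \<le> 1" using u Suc.prems by auto
  define A where "A = (\<Sum>j\<in>{1..m}. P th x j * endval m \<pi> f \<sigma> u th n j)"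
  have "0 \<le> \<sigma> x th * u x + (1 - \<sigma> x th) * A"
    using s u0 b unfolding A_def by (intro add_nonneg_nonneg mult_nonneg_nonneg) auto
  moreover have "\<sigma> x th * u x + (1 - \<sigma> x th) * A \<le> \<sigma> x th * 1 + (1 - \<sigma> x th) * 1"
    using s u0 b unfolding A_def by (intro add_mono mult_left_mono) auto
  ultimately show ?case using u0 unfolding endval_Suc_trans_prob A_def[symmetric] by auto
qed

lemma endval_mono:
  shows "x \<in> {1..m} \<Longrightarrow> endval m \<pi> f \<sigma> u th n x \<le> endval m \<pi> f \<sigma> u th (Suc n) x"
proof (induction n arbitrary: x)
  case 0
  have "0 \<le> endval m \<pi> f \<sigma> u th (Suc 0) x" using endval_bounds[OF "0.prems"] by blast
  then show ?case by (simp only: endval.simps(1))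
next
  case (Suc n)
  have s: "0 \<le> \<sigma> x th" "\<sigma> x th \<le> 1" using \<sigma> Suc.prems unfolding valid_strategy_def by auto
  have "(\<Sum>j\<in>{1..m}. P th x j * endval m \<pi> f \<sigma> u th n j)
      \<le> (\<Sum>j\<in>{1..m}. P th x j * endval m \<pi> f \<sigma> u th (Suc n) j)"
    using Suc.IH trans_prob_nonneg[OF Suc.prems] by (intro sum_mono mult_left_mono) auto
  then have "(1 - \<sigma> x th) * (\<Sum>j\<in>{1..m}. P th x j * endval m \<pi> f \<sigma> u th n j)
      \<le> (1 - \<sigma> x th) * (\<Sum>j\<in>{1..m}. P th x j * endval m \<pi> f \<sigma> u th (Suc n) j)"
    using s by (intro mult_left_mono) auto
  then show ?case by (simp only: endval_Suc_trans_prob) auto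
qed

lemma endval_tendsto:
  assumes x: "x \<in> {1..m}"
  shows "(\<lambda>n. endval m \<pi> f \<sigma> u th n x) \<longlonglongrightarrow> payoff_from \<sigma> u th x"
proof -
  have inc: "incseq (\<lambda>n. endval m \<pi> f \<sigma> u th n x)"
    using endval_mono[OF x] by (simp add: incseq_SucI)
  have bdd: "bdd_above (range (\<lambda>n. endval m \<pi> f \<sigma> u th n x))"
    using endval_bounds[OF x] by (intro bdd_aboveI[of _ 1]) auto
  have "convergent (\<lambda>n. endval m \<pi> f \<sigma> u th n x)"
    using LIMSEQ_incseq_SUP[OF bdd inc] by (auto simp: convergent_def)
  then show ?thesis unfolding payoff_from_def by (simp add: convergent_LIMSEQ_iff)
qed

lemma payoff_from_bounds:
  assumes x: "x \<in> {1..m}"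
  shows "0 \<le> payoff_from \<sigma> u th x" "payoff_from \<sigma> u th x \<le> 1"
  using LIMSEQ_le_const[OF endval_tendsto[OF x]] LIMSEQ_le_const2[OF endval_tendsto[OF x]]
    endval_bounds[OF x] by auto

end

lemma endval_le_majorant:
  assumes \<sigma>: "valid_strategy m \<sigma>"
    and V0: "\<And>x. x \<in> {1..m} \<Longrightarrow> 0 \<le> V x" and Vu: "\<And>x. x \<in> {1..m} \<Longrightarrow> u x \<le> V x"
    and Vex: "\<And>x. x \<in> {1..m} \<Longrightarrow> \<not> absorbing f x \<Longrightarrow> (\<Sum>j\<in>{1..m}. P th x j * V j) \<le> V x"
  shows "x \<in> {1..m} \<Longrightarrow> endval m \<pi> f \<sigma> u th n x \<le> V x"
proof (induction n arbitrary: x)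
  case 0 then show ?case using V0 by simp
next
  case (Suc n)
  have s: "0 \<le> \<sigma> x th" "\<sigma> x th \<le> 1" using \<sigma> Suc.prems unfolding valid_strategy_def by auto
  show ?case
  proof (cases "absorbing f x")
    case True then show ?thesis using Vu[OF Suc.prems] by simp
  next
    case False
    have "(\<Sum>j\<in>{1..m}. P th x j * endval m \<pi> f \<sigma> u th n j) \<le> (\<Sum>j\<in>{1..m}. P th x j * V j)"
      using Suc.IH trans_prob_nonneg[OF Suc.prems] by (intro sum_mono mult_left_mono) auto
    also have "\<dots> \<le> V x" using Vex[OF Suc.prems False] .
    finally have A: "(\<Sum>j\<in>{1..m}. P th x j * endval m \<pi> f \<sigma> u th n j) \<le> V x" .
    have "\<sigma> x th * u x + (1 - \<sigma> x th) * (\<Sum>j\<in>{1..m}. P th x j * endval m \<pi> f \<sigma> u th n j)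
          \<le> \<sigma> x th * V x + (1 - \<sigma> x th) * V x"
      using s A Vu[OF Suc.prems] by (intro add_mono mult_left_mono) auto
    then show ?thesis using False by (simp add: algebra_simps)
  qed
qed

lemma payoff_from_le_majorant:
  assumes \<sigma>: "valid_strategy m \<sigma>" and u: "\<And>x. x \<in> {1..m} \<Longrightarrow> 0 \<le> u x \<and> u x \<le> 1"
    and V0: "\<And>x. x \<in> {1..m} \<Longrightarrow> 0 \<le> V x" and Vu: "\<And>x. x \<in> {1..m} \<Longrightarrow> u x \<le> V x"
    and Vex: "\<And>x. x \<in> {1..m} \<Longrightarrow> \<not> absorbing f x \<Longrightarrow> (\<Sum>j\<in>{1..m}. P th x j * V j) \<le> V x"
    and x: "x \<in> {1..m}"
  shows "payoff_from \<sigma> u th x \<le> V x"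
  using LIMSEQ_le_const2[OF endval_tendsto[OF \<sigma> u x]] endval_le_majorant[OF \<sigma> V0 Vu Vex x] by auto

lemma payoff_from_stop:
  assumes "absorbing f x \<or> \<sigma> x th = 1"
  shows "payoff_from \<sigma> u th x = u x"
proof -
  have "endval m \<pi> f \<sigma> u th (Suc n) x = u x" for n using assms by auto
  then have "(\<lambda>n. endval m \<pi> f \<sigma> u th (Suc n) x) \<longlonglongrightarrow> u x" by simp
  then have "(\<lambda>n. endval m \<pi> f \<sigma> u th n x) \<longlonglongrightarrow> u x" by (rule LIMSEQ_imp_Suc)
  then show ?thesis unfolding payoff_from_def by (rule limI)
qed

lemma payoff_from_continue:
  assumes \<sigma>: "valid_strategy m \<sigma>" and u: "\<And>x. x \<in> {1..m} \<Longrightarrow> 0 \<le> u x \<and> u x \<le> 1"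
    and na: "\<not> absorbing f x" and s0: "\<sigma> x th = 0" and x: "x \<in> {1..m}"
  shows "payoff_from \<sigma> u th x = (\<Sum>j\<in>{1..m}. P th x j * payoff_from \<sigma> u th j)"
proof -
  have "(\<lambda>n. endval m \<pi> f \<sigma> u th (Suc n) x) = (\<lambda>n. \<Sum>j\<in>{1..m}. P th x j * endval m \<pi> f \<sigma> u th n j)"
    using na s0 by simp
  moreover have "(\<lambda>n. \<Sum>j\<in>{1..m}. P th x j * endval m \<pi> f \<sigma> u th n j)
                   \<longlonglongrightarrow> (\<Sum>j\<in>{1..m}. P th x j * payoff_from \<sigma> u th j)"
    by (intro tendsto_sum tendsto_mult_left endval_tendsto[OF \<sigma> u]) auto
  moreover have "(\<lambda>n. endval m \<pi> f \<sigma> u th (Suc n) x) \<longlonglongrightarrow> payoff_from \<sigma> u th x"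
    using endval_tendsto[OF \<sigma> u x] by (rule LIMSEQ_Suc)
  ultimately show ?thesis using LIMSEQ_unique by metis
qed

text \<open>A majorant that equals the reward where a pure strategy stops and is harmonic where it
  continues is the payoff of that strategy, unless the strategy continues forever on a closed
  class: the excess of the majorant over the payoff is subharmonic, so its maximum is attained
  on a closed class.\<close>

lemma payoff_from_eq_majorant:
  assumes \<sigma>: "valid_strategy m \<sigma>" and u: "\<And>x. x \<in> {1..m} \<Longrightarrow> 0 \<le> u x \<and> u x \<le> 1"
    and s01: "\<And>x. x \<in> {1..m} \<Longrightarrow> \<sigma> x th = 0 \<or> \<sigma> x th = 1"
    and C_def: "C = {x\<in>{1..m}. \<not> absorbing f x \<and> \<sigma> x th = 0}"
    and Vle: "\<And>x. x \<in> {1..m} \<Longrightarrow> payoff_from \<sigma> u th x \<le> V x"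
    and Voff: "\<And>x. x \<in> {1..m} \<Longrightarrow> x \<notin> C \<Longrightarrow> V x = u x"
    and Von: "\<And>x. x \<in> C \<Longrightarrow> V x = (\<Sum>j\<in>{1..m}. P th x j * V j)"
  shows "(\<forall>x\<in>{1..m}. payoff_from \<sigma> u th x = V x) \<or> (\<exists>Z. Z \<subseteq> C \<and> Z \<noteq> {} \<and> closed_class th Z)"
proof -
  define e where "e x = V x - payoff_from \<sigma> u th x" for x
  have e0: "0 \<le> e x" if "x \<in> {1..m}" for x using Vle[OF that] unfolding e_def by simp
  have eoff: "e x = 0" if x: "x \<in> {1..m}" "x \<notin> C" for x
    using Voff[OF x] payoff_from_stop[of x \<sigma> th u] s01[OF x(1)] x unfolding e_def C_def by auto
  have eon: "e x = (\<Sum>j\<in>{1..m}. P th x j * e j)" if "x \<in> C" for x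
    using Von[OF that] payoff_from_continue[OF \<sigma> u, where x=x and th=th] that
    unfolding e_def C_def by (simp add: algebra_simps sum_subtractf)
  have sub: "e x \<le> (\<Sum>j\<in>{1..m}. P th x j * e j)" if x: "x \<in> {1..m}" for x
  proof (cases "x \<in> C")
    case True then show ?thesis using eon by simp
  next
    case False
    have "0 \<le> (\<Sum>j\<in>{1..m}. P th x j * e j)"
      using e0 trans_prob_nonneg[OF x] by (intro sum_nonneg mult_nonneg_nonneg) auto
    then show ?thesis using eoff[OF x False] by simp
  qed
  show ?thesis
  proof (cases "\<forall>x\<in>{1..m}. e x = 0")
    case True then show ?thesis unfolding e_def by auto
  next
    case False
    then obtain y where y: "y \<in> {1..m}" "e y \<noteq> 0" by auto
    define Z where "Z = {x\<in>{1..m}. e x = Max (e ` {1..m})}"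
    have cl: "closed_class th {1..m}" unfolding closed_class_def by auto
    have "\<And>x. x \<in> {1..m} \<Longrightarrow> e x = Max (e ` {1..m}) \<Longrightarrow> e x \<le> (\<Sum>j\<in>{1..m}. P th x j * e j)"
      using sub by blast
    moreover have "{1..m} \<noteq> {}" using y by auto
    ultimately have "Z \<noteq> {}" "closed_class th Z"
      using argmax_closed_class[of "{1..m}" th e] cl unfolding Z_def by blast+
    moreover have "Z \<subseteq> C"
    proof
      fix x assume "x \<in> Z"
      moreover have "e y \<le> Max (e ` {1..m})" using y by simp
      then have "0 < Max (e ` {1..m})" using e0[OF y(1)] y(2) by linarith
      ultimately show "x \<in> C" using eoff unfolding Z_def by force
    qed
    ultimately show ?thesis by blast
  qed
qed

context
  fixes a :: "nat \<Rightarrow> real" and th :: theta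
  assumes a: "\<And>x. x \<in> {1..m} \<Longrightarrow> 0 \<le> a x \<and> a x \<le> 1"
begin

lemma snell_iter_bounds: "x \<in> {1..m} \<Longrightarrow> 0 \<le> snell_iter m \<pi> f a th n x \<and> snell_iter m \<pi> f a th n x
    \<le> 1"
proof (induction n arbitrary: x)
  case 0 then show ?case by simp
next
  case (Suc n)
  have "0 \<le> (\<Sum>j\<in>{1..m}. P th x j * snell_iter m \<pi> f a th n j)"
    "(\<Sum>j\<in>{1..m}. P th x j * snell_iter m \<pi> f a th n j) \<le> 1"
    using trans_prob_average_bounds[of x "snell_iter m \<pi> f a th n" th] Suc.prems Suc.IH by auto
  then show ?case using a[OF Suc.prems] by auto
qed

lemma snell_iter_mono: "x \<in> {1..m} \<Longrightarrow> snell_iter m \<pi> f a th n x \<le> snell_iter m \<pi> f a th (Suc n) x"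
proof (induction n arbitrary: x)
  case 0 then show ?case using snell_iter_bounds[OF "0.prems", of "Suc 0"] by simp
next
  case (Suc n)
  have "(\<Sum>j\<in>{1..m}. P th x j * snell_iter m \<pi> f a th n j)
      \<le> (\<Sum>j\<in>{1..m}. P th x j * snell_iter m \<pi> f a th (Suc n) j)"
    using Suc.IH trans_prob_nonneg[OF Suc.prems] by (intro sum_mono mult_left_mono) auto
  then show ?case by (simp only: snell_iter.simps) auto
qed

definition snell :: "nat \<Rightarrow> real" where "snell x = lim (\<lambda>n. snell_iter m \<pi> f a th n x)"

lemma snell_iter_tendsto: "x \<in> {1..m} \<Longrightarrow> (\<lambda>n. snell_iter m \<pi> f a th n x) \<longlonglongrightarrow> snell x"
proof -
  assume x: "x \<in> {1..m}"
  have inc: "incseq (\<lambda>n. snell_iter m \<pi> f a th n x)"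
    using snell_iter_mono[OF x] by (simp add: incseq_SucI)
  have bdd: "bdd_above (range (\<lambda>n. snell_iter m \<pi> f a th n x))"
    using snell_iter_bounds[OF x] by (intro bdd_aboveI[of _ 1]) auto
  have "convergent (\<lambda>n. snell_iter m \<pi> f a th n x)"
    using LIMSEQ_incseq_SUP[OF bdd inc] by (auto simp: convergent_def)
  then show ?thesis unfolding snell_def by (simp add: convergent_LIMSEQ_iff)
qed

lemma snell_bounds: "x \<in> {1..m} \<Longrightarrow> 0 \<le> snell x \<and> snell x \<le> 1"
proof -
  assume x: "x \<in> {1..m}"
  show ?thesis
    using LIMSEQ_le_const[OF snell_iter_tendsto[OF x]] LIMSEQ_le_const2[OF snell_iter_tendsto[OF x]]
      snell_iter_bounds[OF x] by auto
qed

lemma snell_iter_le_snell: "x \<in> {1..m} \<Longrightarrow> snell_iter m \<pi> f a th n x \<le> snell x"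
proof -
  assume x: "x \<in> {1..m}"
  have inc: "incseq (\<lambda>n. snell_iter m \<pi> f a th n x)" using snell_iter_mono[OF x]
    by (simp add: incseq_SucI)
  show ?thesis by (rule incseq_le[OF inc snell_iter_tendsto[OF x]])
qed

lemma snell_eq: "x \<in> {1..m} \<Longrightarrow> snell x
    = (if absorbing f x then a x else max (a x) (\<Sum>j\<in>{1..m}. P th x j * snell j))"
proof -
  assume x: "x \<in> {1..m}"
  have "(\<lambda>n. snell_iter m \<pi> f a th (Suc n) x)
          \<longlonglongrightarrow> (if absorbing f x then a x else max (a x) (\<Sum>j\<in>{1..m}. P th x j * snell j))"
  proof (cases "absorbing f x")
    case True then show ?thesis by simp
  next
    case False
    have e: "(\<lambda>n. snell_iter m \<pi> f a th (Suc n) x)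
        = (\<lambda>n. max (a x) (\<Sum>j\<in>{1..m}. P th x j * snell_iter m \<pi> f a th n j))"
      using False by simp
    have "(\<lambda>n. max (a x) (\<Sum>j\<in>{1..m}. P th x j * snell_iter m \<pi> f a th n j))
            \<longlonglongrightarrow> max (a x) (\<Sum>j\<in>{1..m}. P th x j * snell j)"
      by (intro tendsto_max tendsto_const tendsto_sum tendsto_mult_left snell_iter_tendsto) simp
    then show ?thesis using False e by simp
  qed
  moreover have "(\<lambda>n. snell_iter m \<pi> f a th (Suc n) x) \<longlonglongrightarrow> snell x" using snell_iter_tendsto[OF x]
    by (rule LIMSEQ_Suc)
  ultimately show ?thesis by (rule LIMSEQ_unique[rotated])
qed

lemma snell_ge: "x \<in> {1..m} \<Longrightarrow> a x \<le> snell x"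
proof -
  assume x: "x \<in> {1..m}"
  show ?thesis using snell_eq[OF x] by (cases "absorbing f x") auto
qed

lemma snell_excessive: "x \<in> {1..m} \<Longrightarrow> \<not> absorbing f x \<Longrightarrow> (\<Sum>j\<in>{1..m}. P th x j * snell j) \<le> snell x"
proof -
  assume x: "x \<in> {1..m}" and na: "\<not> absorbing f x"
  have "snell x = max (a x) (\<Sum>j\<in>{1..m}. P th x j * snell j)" using snell_eq[OF x] na by simp
  then show ?thesis by simp
qed

lemma endval_le_snell_iter:
  assumes \<sigma>: "valid_strategy m \<sigma>"
  shows "x \<in> {1..m} \<Longrightarrow> endval m \<pi> f \<sigma> a th n x \<le> snell_iter m \<pi> f a th n x"
proof (induction n arbitrary: x)
  case 0 then show ?case by simp
next
  case (Suc n)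
  have s: "0 \<le> \<sigma> x th" "\<sigma> x th \<le> 1" using \<sigma> Suc.prems unfolding valid_strategy_def by auto
  have A: "(\<Sum>j\<in>{1..m}. P th x j * endval m \<pi> f \<sigma> a th n j)
      \<le> (\<Sum>j\<in>{1..m}. P th x j * snell_iter m \<pi> f a th n j)"
    using Suc.IH trans_prob_nonneg[OF Suc.prems] by (intro sum_mono mult_left_mono) auto
  define B where "B = max (a x) (\<Sum>j\<in>{1..m}. P th x j * snell_iter m \<pi> f a th n j)"
  have "\<sigma> x th * a x + (1 - \<sigma> x th) * (\<Sum>j\<in>{1..m}. P th x j * endval m \<pi> f \<sigma> a th n j)
      \<le> \<sigma> x th * B + (1 - \<sigma> x th) * B"
    using s A unfolding B_def by (intro add_mono mult_left_mono) auto
  then show ?case unfolding B_def by (simp add: algebra_simps)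
qed

lemma payoff_from_le_snell:
  assumes \<sigma>: "valid_strategy m \<sigma>" and x: "x \<in> {1..m}"
  shows "payoff_from \<sigma> a th x \<le> snell x"
proof -
  have "(\<lambda>n. endval m \<pi> f \<sigma> a th n x) \<longlonglongrightarrow> payoff_from \<sigma> a th x"
    using endval_tendsto[of \<sigma> a x th] \<sigma> a x by blast
  moreover have "endval m \<pi> f \<sigma> a th n x \<le> snell x" for n
    using endval_le_snell_iter[OF \<sigma> x, of n] snell_iter_le_snell[OF x, of n] by linarith
  ultimately show ?thesis by (intro LIMSEQ_le_const2) auto
qed

lemma snell_le_on_closed_class:
  assumes Z: "Z \<subseteq> {1..m}" "closed_class th Z" "\<And>x. x \<in> Z \<Longrightarrow> \<not> absorbing f x"
    and A: "0 \<le> A" "\<And>x. x \<in> Z \<Longrightarrow> a x \<le> A" and x: "x \<in> Z"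
  shows "snell x \<le> A"
proof -
  have "snell_iter m \<pi> f a th n x \<le> A" if "x \<in> Z" for n x
    using that
  proof (induction n arbitrary: x)
    case 0 then show ?case using A by simp
  next
    case (Suc n)
    have xm: "x \<in> {1..m}" using Suc.prems Z(1) by auto
    have "(\<Sum>j\<in>{1..m}. P th x j * snell_iter m \<pi> f a th n j) \<le> (\<Sum>j\<in>{1..m}. P th x j * A)"
    proof (intro sum_mono)
      fix j assume j: "j \<in> {1..m}"
      show "P th x j * snell_iter m \<pi> f a th n j \<le> P th x j * A"
      proof (cases "j \<in> Z")
        case True then show ?thesis using Suc.IH trans_prob_nonneg[OF xm j]
          by (intro mult_left_mono) auto
      next
        case False
        then have "P th x j = 0"
          using Z(2) Suc.prems j trans_prob_nonneg[OF xm j, of th] unfolding closed_class_def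
            by force
        then show ?thesis by simp
      qed
    qed
    also have "\<dots> = A" using trans_prob_sum[OF xm] by (simp add: sum_distrib_right[symmetric])
    finally show ?case using Z(3) A(2) Suc.prems by simp
  qed
  then show ?thesis
    using LIMSEQ_le_const2[OF snell_iter_tendsto] x Z(1) by blast
qed

definition snell_stopping :: "nat \<Rightarrow> theta \<Rightarrow> real" where
  "snell_stopping x t = (if snell x \<le> a x then 1 else 0)"

lemma snell_stopping_valid: "valid_strategy m snell_stopping"
  unfolding valid_strategy_def snell_stopping_def by auto

text \<open>The continuation region of the Snell stopping rule contains no closed class: on the states
  of such a class where the envelope is maximal, the envelope could not exceed the largest reward.\<close>

lemma payoff_snell_stopping:
  assumes x: "x \<in> {1..m}"
  shows "payoff_from snell_stopping a th x = snell x"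
proof -
  define C where "C = {x\<in>{1..m}. \<not> absorbing f x \<and> snell_stopping x th = 0}"
  have C_alt: "x \<in> C \<longleftrightarrow> x \<in> {1..m} \<and> \<not> absorbing f x \<and> a x < snell x" for x
    unfolding C_def snell_stopping_def by auto
  have off: "snell x = a x" if "x \<in> {1..m}" "x \<notin> C" for x
    using that C_alt[of x] snell_eq[of x] snell_ge[of x] by (cases "absorbing f x") auto
  have on: "snell x = (\<Sum>j\<in>{1..m}. P th x j * snell j)" if "x \<in> C" for x
    using that C_alt[of x] snell_eq[of x] by (auto simp: max_def split: if_splits)
  have "\<not> (Z \<subseteq> C \<and> Z \<noteq> {} \<and> closed_class th Z)" for Z
  proof
    assume Z: "Z \<subseteq> C \<and> Z \<noteq> {} \<and> closed_class th Z"
    then have Zm: "Z \<subseteq> {1..m}" using C_def by auto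
    define Z' where "Z' = {x\<in>Z. snell x = Max (snell ` Z)}"
    have "\<And>x. x \<in> Z \<Longrightarrow> snell x = Max (snell ` Z) \<Longrightarrow> snell x \<le> (\<Sum>j\<in>{1..m}. P th x j * snell j)"
      using Z on by auto
    with argmax_closed_class[of Z th snell] Zm Z have Z': "Z' \<noteq> {}" "closed_class th Z'"
      unfolding Z'_def by blast+
    have Z'C: "Z' \<subseteq> C" "finite Z'" using Z Zm unfolding Z'_def by (auto intro: finite_subset)
    have "Max (a ` Z') \<in> a ` Z'" using Z' Z'C by (intro Max_in) auto
    then obtain z' where z': "z' \<in> Z'" "a z' = Max (a ` Z')" by force
    have "snell z' \<le> a z'"
    proof (rule snell_le_on_closed_class[OF _ Z'(2)])
      show "Z' \<subseteq> {1..m}" "\<And>x. x \<in> Z' \<Longrightarrow> \<not> absorbing f x" using Z'C C_alt by auto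
      show "0 \<le> a z'" using a z' Z'C C_alt by blast
      show "\<And>x. x \<in> Z' \<Longrightarrow> a x \<le> a z'" using z'(2) Z'C by simp
    qed (use z' in simp)
    then show False using z' Z'C C_alt by auto
  qed
  moreover have "payoff_from snell_stopping a th x \<le> snell x" if "x \<in> {1..m}" for x
    using payoff_from_le_snell[OF snell_stopping_valid that] .
  moreover have "\<And>x. snell_stopping x th = 0 \<or> snell_stopping x th = 1"
    unfolding snell_stopping_def by auto
  ultimately show ?thesis
    using payoff_from_eq_majorant[OF snell_stopping_valid a _ C_def _ off on] x by blast
qed

end

lemma endval_cong:
  assumes "\<And>x. \<sigma>1 x th = \<sigma>2 x th"
  shows "endval m \<pi> f \<sigma>1 u th n x = endval m \<pi> f \<sigma>2 u th n x"
  using assms by (induction n arbitrary: x) auto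

lemma payoff_from_cong:
  assumes "\<And>x. \<sigma>1 x th = \<sigma>2 x th"
  shows "payoff_from \<sigma>1 u th x = payoff_from \<sigma>2 u th x"
  unfolding payoff_from_def using endval_cong[of \<sigma>1 th \<sigma>2, OF assms] by simp

lemma endval_add:
  "endval m \<pi> f \<sigma> (\<lambda>x. u1 x + u2 x) th n x = endval m \<pi> f \<sigma> u1 th n x + endval m \<pi> f \<sigma> u2 th n x"
proof (induction n arbitrary: x)
  case 0 then show ?case by simp
next
  case (Suc n)
  have "(\<Sum>j\<in>{1..m}. P th x j * endval m \<pi> f \<sigma> (\<lambda>x. u1 x + u2 x) th n j)
      = (\<Sum>j\<in>{1..m}. P th x j * endval m \<pi> f \<sigma> u1 th n j) +
        (\<Sum>j\<in>{1..m}. P th x j * endval m \<pi> f \<sigma> u2 th n j)"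
    by (simp add: Suc.IH distrib_left sum.distrib)
  then show ?case by (simp add: algebra_simps)
qed

lemma payoff_from_add:
  assumes \<sigma>: "valid_strategy m \<sigma>"
    and u1: "\<And>x. x \<in> {1..m} \<Longrightarrow> 0 \<le> u1 x \<and> u1 x \<le> 1"
    and u2: "\<And>x. x \<in> {1..m} \<Longrightarrow> 0 \<le> u2 x \<and> u2 x \<le> 1"
    and u3: "\<And>x. x \<in> {1..m} \<Longrightarrow> 0 \<le> u1 x + u2 x \<and> u1 x + u2 x \<le> 1"
    and x: "x \<in> {1..m}"
  shows "payoff_from \<sigma> (\<lambda>x. u1 x + u2 x) th x = payoff_from \<sigma> u1 th x + payoff_from \<sigma> u2 th x"
proof -
  have l1: "(\<lambda>n. endval m \<pi> f \<sigma> u1 th n x) \<longlonglongrightarrow> payoff_from \<sigma> u1 th x"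
    using endval_tendsto[of \<sigma> u1 x th] \<sigma> u1 x by blast
  have l2: "(\<lambda>n. endval m \<pi> f \<sigma> u2 th n x) \<longlonglongrightarrow> payoff_from \<sigma> u2 th x"
    using endval_tendsto[of \<sigma> u2 x th] \<sigma> u2 x by blast
  have l3: "(\<lambda>n. endval m \<pi> f \<sigma> (\<lambda>x. u1 x + u2 x) th n x) \<longlonglongrightarrow> payoff_from \<sigma> (\<lambda>x. u1 x + u2 x) th x"
    using endval_tendsto[of \<sigma> "\<lambda>x. u1 x + u2 x" x th] \<sigma> u3 x by blast
  have "(\<lambda>n. endval m \<pi> f \<sigma> (\<lambda>x. u1 x + u2 x) th n x) \<longlonglongrightarrow> payoff_from \<sigma> u1 th x
      + payoff_from \<sigma> u2 th x"
    unfolding endval_add by (rule tendsto_add[OF l1 l2])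
  then show ?thesis using l3 by (rule LIMSEQ_unique[rotated])
qed

lemma payoff_theta_eq_sum: "payoff_theta m \<pi> f g \<sigma> u th = (\<Sum>x\<in>{1..m}. g x * payoff_from \<sigma> u th x)"
  unfolding payoff_theta_def payoff_from_def ..

end

section \<open>The upper bound\<close>

lemma sorted_enumeration:
  fixes V :: "real set"
  assumes "finite V"
  obtains w where "\<And>i j. i < j \<Longrightarrow> j < card V \<Longrightarrow> w i < w j"
    and "\<And>i. i < card V \<Longrightarrow> w i \<in> V" and "\<And>y. y \<in> V \<Longrightarrow> \<exists>i<card V. w i = y"
proof
  define l where "l = sorted_list_of_set V"
  have l: "set l = V" "length l = card V" "sorted_wrt (<) l" unfolding l_def using assms by auto
  show "\<And>i j. i < j \<Longrightarrow> j < card V \<Longrightarrow> l ! i < l ! j" using sorted_wrt_nth_less l by metis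
  show "\<And>i. i < card V \<Longrightarrow> l ! i \<in> V" using l by auto
  show "\<And>y. y \<in> V \<Longrightarrow> \<exists>i<card V. l ! i = y" using l by (auto simp: in_set_conv_nth)
qed

lemma odds_less_or_extreme:
  fixes v W gm :: real and K m :: nat
  assumes v: "0 \<le> v" "v \<le> W" "W \<le> 1" and gm: "1 < gm" and K: "K \<le> m" "4 \<le> m"
    and odds: "W * (1 - v) \<le> gm ^ (K - 2) * v * (1 - W)"
    and strict: "W = v \<or> (4 \<le> K \<longrightarrow> W * (1 - v) < gm ^ (K - 2) * v * (1 - W))"
  shows "W * (1 - v) < gm ^ (m - 2) * v * (1 - W) \<or> v = 0 \<or> v = 1"
proof (cases "0 < v * (1 - W)")
  case False
  then have "v = 0 \<or> W = 1" using v mult_pos_pos[of v "1 - W"] by fastforce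
  then show ?thesis using odds v by auto
next
  case pos: True
  show ?thesis
  proof (cases "K < m")
    case True
    have "gm ^ (K - 2) < gm ^ (m - 2)" using gm True K by (intro power_strict_increasing) auto
    then have "gm ^ (K - 2) * (v * (1 - W)) < gm ^ (m - 2) * (v * (1 - W))"
      using pos by (intro mult_strict_right_mono)
    then show ?thesis using odds by (simp add: mult.assoc)
  next
    case False
    then have "K = m" using K by simp
    moreover have "1 * (v * (1 - W)) < gm ^ (m - 2) * (v * (1 - W))"
      using gm K pos by (intro mult_strict_right_mono one_less_power) auto
    ultimately show ?thesis using strict K by (auto simp: mult.assoc)
  qed
qed

lemma convex_combination_le:
  fixes g F :: "nat \<Rightarrow> real"
  assumes "\<And>x. x \<in> A \<Longrightarrow> 0 \<le> g x" "(\<Sum>x\<in>A. g x) = 1" "\<And>x. x \<in> A \<Longrightarrow> F x \<le> B"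
  shows "(\<Sum>x\<in>A. g x * F x) \<le> B"
proof -
  have "(\<Sum>x\<in>A. g x * F x) \<le> (\<Sum>x\<in>A. g x * B)" using assms by (intro sum_mono mult_left_mono) auto
  then show ?thesis using assms(2) by (simp add: sum_distrib_right[symmetric])
qed

lemma convex_combination_less:
  fixes g F :: "nat \<Rightarrow> real"
  assumes "finite A" "\<And>x. x \<in> A \<Longrightarrow> 0 \<le> g x" "(\<Sum>x\<in>A. g x) = 1" "\<And>x. x \<in> A \<Longrightarrow> F x < B"
  shows "(\<Sum>x\<in>A. g x * F x) < B"
proof -
  obtain x0 where x0: "x0 \<in> A" "0 < g x0"
    using assms(2,3) sum_nonneg_eq_0_iff[OF assms(1), of g] by (metis less_eq_real_def zero_neq_one)
  have "(\<Sum>x\<in>A. g x * F x) < (\<Sum>x\<in>A. g x * B)"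
  proof (rule sum_strict_mono_ex1[OF assms(1)])
    show "\<forall>x\<in>A. g x * F x \<le> g x * B" using assms by (auto intro: mult_left_mono less_imp_le)
    show "\<exists>x\<in>A. g x * F x < g x * B" using x0 assms(4)
      by (intro bexI[of _ x0] mult_strict_left_mono)
  qed
  then show ?thesis using assms(3) by (simp add: sum_distrib_right[symmetric])
qed

context memory_chain
begin

lemma excessive_of_increment_bound:
  assumes x: "x \<in> {1..m}" and vex: "(\<Sum>j\<in>{1..m}. P L x j * v j) \<le> v x" and \<mu>: "0 \<le> \<mu>"
    and inc: "\<And>j. j \<in> {1..m} \<Longrightarrow> P H x j * (W j - W x) \<le> \<mu> * (P L x j * (v j - v x))"
  shows "(\<Sum>j\<in>{1..m}. P H x j * W j) \<le> W x"
proof -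
  have "(\<Sum>j\<in>{1..m}. P H x j * W j) - W x = (\<Sum>j\<in>{1..m}. P H x j * (W j - W x))"
    using trans_prob_sum[OF x, of H]
      by (simp add: right_diff_distrib sum_subtractf sum_distrib_right[symmetric])
  also have "\<dots> \<le> (\<Sum>j\<in>{1..m}. \<mu> * (P L x j * (v j - v x)))" using inc by (intro sum_mono)
  also have "\<dots> = \<mu> * ((\<Sum>j\<in>{1..m}. P L x j * v j) - v x)"
    using trans_prob_sum[OF x, of L]
    by (simp add: sum_distrib_left[symmetric] right_diff_distrib sum_subtractf
        sum_distrib_right[symmetric])
  also have "\<dots> \<le> 0" using vex \<mu> by (simp add: mult_nonneg_nonpos)
  finally show ?thesis by simp
qed

text \<open>The witness \<open>W\<close> is the stretch of the sorted values of \<open>v\<close>.\<close>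

lemma excessive_stretch:
  assumes gam: "1 < gamma \<pi>" and lu: "0 < lunder \<pi>" and m1: "1 \<le> m"
    and v01: "\<And>x. x \<in> {1..m} \<Longrightarrow> 0 \<le> v x \<and> v x \<le> 1"
    and vex: "\<And>x. x \<in> {1..m} \<Longrightarrow> \<not> absorbing f x \<Longrightarrow> (\<Sum>j\<in>{1..m}. P L x j * v j) \<le> v x"
  defines "K \<equiv> card (v ` {1..m})"
  obtains W where "\<And>x. x \<in> {1..m} \<Longrightarrow> v x \<le> W x \<and> W x \<le> 1
              \<and> W x * (1 - v x) \<le> gamma \<pi> ^ (K - 2) * v x * (1 - W x)
              \<and> (W x = v x \<or> (4 \<le> K \<longrightarrow> W x * (1 - v x) < gamma \<pi> ^ (K - 2) * v x * (1 - W x)))"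
    and "\<And>x. x \<in> {1..m} \<Longrightarrow> \<not> absorbing f x \<Longrightarrow> (\<Sum>j\<in>{1..m}. P H x j * W j) \<le> W x"
proof -
  obtain w where wmono: "\<And>i j. i < j \<Longrightarrow> j < K \<Longrightarrow> w i < w j"
    and winV: "\<And>i. i < K \<Longrightarrow> w i \<in> v ` {1..m}" and Vw: "\<And>y. y \<in> v ` {1..m} \<Longrightarrow> \<exists>i<K. w i = y"
    unfolding K_def by (rule sorted_enumeration[of "v ` {1..m}"]) auto
  have K1: "1 \<le> K" unfolding K_def using m1 by (simp add: Suc_le_eq card_gt_0_iff)
  have w01: "0 \<le> w i \<and> w i \<le> 1" if "i < K" for i using winV[OF that] v01 by auto
  interpret grid_stretch K w "gamma \<pi>"
  proof
    show "0 \<le> w 0" "w (K - 1) \<le> 1" using w01[of 0] w01[of "K - 1"] K1 by auto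
    show "\<And>i j. i < j \<Longrightarrow> j < K \<Longrightarrow> w i < w j" by (rule wmono)
  qed (rule K1, rule gam)
  define idx where "idx x = (SOME i. i < K \<and> w i = v x)" for x
  have idx: "idx x < K \<and> w (idx x) = v x" if "x \<in> {1..m}" for x
  proof -
    have "\<exists>i. i < K \<and> w i = v x" using Vw that by blast
    then show ?thesis unfolding idx_def by (rule someI_ex)
  qed
  define W where "W x = stretch (idx x)" for x
  have props: "v x \<le> W x \<and> W x \<le> 1
          \<and> W x * (1 - v x) \<le> gamma \<pi> ^ (K - 2) * v x * (1 - W x)
          \<and> (W x = v x \<or> (4 \<le> K \<longrightarrow> W x * (1 - v x) < gamma \<pi> ^ (K - 2) * v x * (1 - W x)))"
    if x: "x \<in> {1..m}" for x
    using stretch_properties[of "idx x"] idx[OF x] unfolding W_def by simp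
  have lbar: "lbar \<pi> = gamma \<pi> * lunder \<pi>" unfolding gamma_def using lu by simp
  have exc: "(\<Sum>j\<in>{1..m}. P H x j * W j) \<le> W x" if x: "x \<in> {1..m}" and na: "\<not> absorbing f x" for x
  proof (rule excessive_of_increment_bound[OF x vex[OF x na]])
    show "0 \<le> lunder \<pi> * (scale * gamma \<pi> ^ (K - 1 - idx x))" using lu scale_nonneg gam by simp
    fix j assume j: "j \<in> {1..m}"
    show "P H x j * (W j - W x)
        \<le> lunder \<pi> * (scale * gamma \<pi> ^ (K - 1 - idx x)) * (P L x j * (v j - v x))"
      using stretch_increment_le[of "idx x" "idx j" "lunder \<pi>" "P L x j" "P H x j"] idx[OF x] idx[OF
        j]
        lu trans_prob_nonneg[OF x j] trans_prob_H_le[OF x j] trans_prob_H_ge[OF x j]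
      unfolding W_def lbar by (simp add: mult_ac)
  qed
  from props exc show ?thesis by (rule that)
qed

text \<open>A best response gives the low type at least the value of its optimal stopping problem:
  otherwise deviating, in state \<open>L\<close> only, to the Snell stopping rule would raise the sender's
  payoff without affecting the high type.\<close>

lemma snell_le_best_response:
  assumes p: "0 < p" "p < 1" and vp: "valid_protocol m f g a" and sb: "\<sigma> \<in> br m \<pi> p f g a"
  shows "(\<Sum>x\<in>{1..m}. g x * snell a L x) \<le> (\<Sum>x\<in>{1..m}. g x * payoff_from \<sigma> a L x)"
proof -
  have a01: "\<And>x. x \<in> {1..m} \<Longrightarrow> 0 \<le> a x \<and> a x \<le> 1" using vp unfolding valid_protocol_def by auto
  have \<sigma>: "valid_strategy m \<sigma>"
    and opt: "\<And>\<sigma>'. valid_strategy m \<sigma>' \<Longrightarrow> US m \<pi> p f g a \<sigma>' \<le> US m \<pi> p f g a \<sigma>"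
    using sb unfolding br_def by auto
  define \<sigma>' where "\<sigma>' x t = (if t = L then snell_stopping a L x t else \<sigma> x t)" for x t
  have \<sigma>': "valid_strategy m \<sigma>'"
    using \<sigma> snell_stopping_valid[OF a01] unfolding valid_strategy_def \<sigma>'_def by auto
  have "payoff_from \<sigma>' a L x = snell a L x" if "x \<in> {1..m}" for x
    using payoff_from_cong[of \<sigma>' L "snell_stopping a L"] payoff_snell_stopping[OF a01 that]
    unfolding \<sigma>'_def by simp
  then have L': "payoff_theta m \<pi> f g \<sigma>' a L = (\<Sum>x\<in>{1..m}. g x * snell a L x)"
    unfolding payoff_theta_eq_sum by simp
  have H': "payoff_theta m \<pi> f g \<sigma>' a H = payoff_theta m \<pi> f g \<sigma> a H"
    unfolding payoff_theta_eq_sum using payoff_from_cong[of \<sigma>' H \<sigma>] by (simp add: \<sigma>'_def)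
  have "(1 - p) * (\<Sum>x\<in>{1..m}. g x * snell a L x) \<le> (1 - p) * payoff_theta m \<pi> f g \<sigma> a L"
    using opt[OF \<sigma>'] unfolding US_def L' H' by simp
  then show ?thesis using p unfolding payoff_theta_eq_sum by simp
qed

lemma UR_le_majorant_combination:
  assumes p: "0 < p" "p < 1" and vp: "valid_protocol m f g a" and \<sigma>: "valid_strategy m \<sigma>"
    and W: "\<And>x. x \<in> {1..m} \<Longrightarrow> 0 \<le> W x \<and> a x \<le> W x"
    and Wex: "\<And>x. x \<in> {1..m} \<Longrightarrow> \<not> absorbing f x \<Longrightarrow> (\<Sum>j\<in>{1..m}. P H x j * W j) \<le> W x"
    and v: "(\<Sum>x\<in>{1..m}. g x * v x) \<le> (\<Sum>x\<in>{1..m}. g x * payoff_from \<sigma> a L x)"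
  shows "UR m \<pi> p f g a \<sigma> \<le> (\<Sum>x\<in>{1..m}. g x * (p * W x + (1 - p) * (1 - v x)))"
proof -
  have a01: "\<And>x. x \<in> {1..m} \<Longrightarrow> 0 \<le> a x \<and> a x \<le> 1"
    and g: "\<And>x. x \<in> {1..m} \<Longrightarrow> 0 \<le> g x" "(\<Sum>x\<in>{1..m}. g x) = 1"
    using vp unfolding valid_protocol_def by auto
  have W0: "\<And>x. x \<in> {1..m} \<Longrightarrow> 0 \<le> W x" and Wa: "\<And>x. x \<in> {1..m} \<Longrightarrow> a x \<le> W x"
    using W by auto
  have H: "payoff_from \<sigma> a H x \<le> W x" if "x \<in> {1..m}" for x
    using payoff_from_le_majorant[OF \<sigma> a01 W0 Wa Wex that] .
  have L: "payoff_from \<sigma> (\<lambda>x. 1 - a x) L x \<le> 1 - payoff_from \<sigma> a L x" if x: "x \<in> {1..m}" for x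
    using payoff_from_add[of \<sigma> "\<lambda>x. 1 - a x" a x L, OF \<sigma> _ a01 _ x] a01
      payoff_from_bounds[of \<sigma> "\<lambda>x. 1" x L] \<sigma> x by simp
  have "(\<Sum>x\<in>{1..m}. g x * (1 - payoff_from \<sigma> a L x)) = 1 - (\<Sum>x\<in>{1..m}. g x * payoff_from \<sigma> a L x)"
    using g by (simp add: right_diff_distrib sum_subtractf)
  also have "\<dots> \<le> (\<Sum>x\<in>{1..m}. g x * (1 - v x))"
    using v g by (simp add: right_diff_distrib sum_subtractf)
  finally have L': "(\<Sum>x\<in>{1..m}. g x * (1 - payoff_from \<sigma> a L x)) \<le> (\<Sum>x\<in>{1..m}. g x * (1 - v x))" .
  have "UR m \<pi> p f g a \<sigma> = p * (\<Sum>x\<in>{1..m}. g x * payoff_from \<sigma> a H x)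
          + (1 - p) * (\<Sum>x\<in>{1..m}. g x * payoff_from \<sigma> (\<lambda>x. 1 - a x) L x)"
    unfolding UR_def payoff_theta_eq_sum ..
  also have "\<dots>
      \<le> p * (\<Sum>x\<in>{1..m}. g x * W x) + (1 - p) * (\<Sum>x\<in>{1..m}. g x * (1 - payoff_from \<sigma> a L x))"
    using p g H L by (intro add_mono mult_left_mono sum_mono) auto
  also have "\<dots> \<le> p * (\<Sum>x\<in>{1..m}. g x * W x) + (1 - p) * (\<Sum>x\<in>{1..m}. g x * (1 - v x))"
    using L' p by simp
  also have "\<dots> = (\<Sum>x\<in>{1..m}. g x * (p * W x + (1 - p) * (1 - v x)))"
    by (simp add: sum_distrib_left distrib_left sum.distrib mult.left_commute)
  finally show ?thesis .
qed

text \<open>The witnesses are the Snell envelope \<open>v\<close> of the low type and its stretch \<open>W\<close>.\<close>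

lemma UR_le_odds_constrained_combination:
  assumes p: "0 < p" "p < 1" and gam: "1 < gamma \<pi>" and lu: "0 < lunder \<pi>" and m: "2 \<le> m"
    and vp: "valid_protocol m f g a" and sb: "\<sigma> \<in> br m \<pi> p f g a"
  obtains W v where "UR m \<pi> p f g a \<sigma> \<le> (\<Sum>x\<in>{1..m}. g x * (p * W x + (1 - p) * (1 - v x)))"
    and "\<And>x. x \<in> {1..m} \<Longrightarrow> 0 \<le> v x \<and> v x \<le> 1 \<and> W x * (1 - v x) \<le> gamma \<pi> ^ (m - 2) * v x * (1 - W x)"
    and "\<And>x. x \<in> {1..m} \<Longrightarrow> 4 \<le> m \<Longrightarrow>
           W x * (1 - v x) < gamma \<pi> ^ (m - 2) * v x * (1 - W x) \<or> v x = 0 \<or> v x = 1"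
proof -
  have a01: "\<And>x. x \<in> {1..m} \<Longrightarrow> 0 \<le> a x \<and> a x \<le> 1" using vp unfolding valid_protocol_def by auto
  have \<sigma>: "valid_strategy m \<sigma>" using sb unfolding br_def by auto
  define v where "v = snell a L"
  define K where "K = card (v ` {1..m})"
  have v01: "\<And>x. x \<in> {1..m} \<Longrightarrow> 0 \<le> v x \<and> v x \<le> 1"
    unfolding v_def using snell_bounds[where a=a and th=L, OF a01] by blast
  have vex: "\<And>x. x \<in> {1..m} \<Longrightarrow> \<not> absorbing f x \<Longrightarrow> (\<Sum>j\<in>{1..m}. P L x j * v j) \<le> v x"
    unfolding v_def using snell_excessive[where a=a and th=L, OF a01] by blast
  have va: "\<And>x. x \<in> {1..m} \<Longrightarrow> a x \<le> v x"
    unfolding v_def using snell_ge[where a=a and th=L, OF a01] by blast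
  have m1: "1 \<le> m" using m by simp
  obtain W where W: "\<And>x. x \<in> {1..m} \<Longrightarrow> v x \<le> W x \<and> W x \<le> 1
              \<and> W x * (1 - v x) \<le> gamma \<pi> ^ (K - 2) * v x * (1 - W x)
              \<and> (W x = v x \<or> (4 \<le> K \<longrightarrow> W x * (1 - v x) < gamma \<pi> ^ (K - 2) * v x * (1 - W x)))"
    and Wex: "\<And>x. x \<in> {1..m} \<Longrightarrow> \<not> absorbing f x \<Longrightarrow> (\<Sum>j\<in>{1..m}. P H x j * W j) \<le> W x"
    using excessive_stretch[OF gam lu m1 v01 vex, folded K_def] by blast
  have K: "K \<le> m" unfolding K_def using card_image_le[of "{1..m}" v] by simp
  have "0 \<le> W x \<and> a x \<le> W x" if "x \<in> {1..m}" for x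
    using W[OF that] v01[OF that] va[OF that] by auto
  from UR_le_majorant_combination[OF p vp \<sigma> this Wex] snell_le_best_response[OF p vp sb]
  have UR: "UR m \<pi> p f g a \<sigma> \<le> (\<Sum>x\<in>{1..m}. g x * (p * W x + (1 - p) * (1 - v x)))"
    unfolding v_def by blast
  have odds: "W x * (1 - v x) \<le> gamma \<pi> ^ (m - 2) * v x * (1 - W x)" if x: "x \<in> {1..m}" for x
  proof -
    have "gamma \<pi> ^ (K - 2) * (v x * (1 - W x)) \<le> gamma \<pi> ^ (m - 2) * (v x * (1 - W x))"
      using W[OF x] v01[OF x] gam K by (intro mult_right_mono power_increasing) auto
    then show ?thesis using W[OF x] by (simp add: mult.assoc)
  qed
  show ?thesis
  proof (rule that[OF UR])
    show "0 \<le> v x \<and> v x \<le> 1 \<and> W x * (1 - v x) \<le> gamma \<pi> ^ (m - 2) * v x * (1 - W x)"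
      if "x \<in> {1..m}" for x
      using v01[OF that] odds[OF that] by simp
    show "W x * (1 - v x) < gamma \<pi> ^ (m - 2) * v x * (1 - W x) \<or> v x = 0 \<or> v x = 1"
      if "x \<in> {1..m}" "4 \<le> m" for x
      by (rule odds_less_or_extreme[OF _ _ _ gam K that(2)])
        (use W[OF that(1)] v01[OF that(1)] in auto)
  qed
qed

lemma UR_le_receiver_bound:
  assumes p: "0 < p" "p < 1" and gam: "1 < gamma \<pi>" and lu: "0 < lunder \<pi>" and m: "2 \<le> m"
    and vp: "valid_protocol m f g a" and sb: "\<sigma> \<in> br m \<pi> p f g a"
  shows "UR m \<pi> p f g a \<sigma> \<le> receiver_bound p (gamma \<pi> ^ (m - 2))"
    and "4 \<le> m \<Longrightarrow> kappa p < gamma \<pi> ^ (m - 2) \<Longrightarrow> UR m \<pi> p f g a \<sigma>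
        < receiver_bound p (gamma \<pi> ^ (m - 2))"
proof -
  have g: "\<And>x. x \<in> {1..m} \<Longrightarrow> 0 \<le> g x" "(\<Sum>x\<in>{1..m}. g x) = 1"
    using vp unfolding valid_protocol_def by auto
  obtain W v where UR: "UR m \<pi> p f g a \<sigma> \<le> (\<Sum>x\<in>{1..m}. g x * (p * W x + (1 - p) * (1 - v x)))"
    and odds: "\<And>x. x \<in> {1..m} \<Longrightarrow> 0 \<le> v x \<and> v x \<le> 1 \<and> W x * (1 - v x)
        \<le> gamma \<pi> ^ (m - 2) * v x * (1 - W x)"
    and strict: "\<And>x. x \<in> {1..m} \<Longrightarrow> 4 \<le> m \<Longrightarrow>
           W x * (1 - v x) < gamma \<pi> ^ (m - 2) * v x * (1 - W x) \<or> v x = 0 \<or> v x = 1"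
    using UR_le_odds_constrained_combination[OF p gam lu m vp sb] by blast
  have "(\<Sum>x\<in>{1..m}. g x * (p * W x + (1 - p) * (1 - v x))) \<le> receiver_bound p (gamma \<pi> ^ (m - 2))"
    using convex_combination_le[OF g] pointwise_receiver_bound[OF p] odds gam
      by (simp add: one_le_power)
  with UR show "UR m \<pi> p f g a \<sigma> \<le> receiver_bound p (gamma \<pi> ^ (m - 2))" by simp
  assume m4: "4 \<le> m" and ck: "kappa p < gamma \<pi> ^ (m - 2)"
  have "p * W x + (1 - p) * (1 - v x) < receiver_bound p (gamma \<pi> ^ (m - 2))" if x: "x \<in> {1..m}"
    for x
  proof (rule pointwise_bound_informative(2)[OF p ck])
    show "0 \<le> v x" "v x \<le> 1" "W x * (1 - v x) \<le> gamma \<pi> ^ (m - 2) * v x * (1 - W x)"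
      using odds[OF x] by auto
  qed (rule strict[OF x m4])
  then have "(\<Sum>x\<in>{1..m}. g x * (p * W x + (1 - p) * (1 - v x)))
      < receiver_bound p (gamma \<pi> ^ (m - 2))"
    by (intro convex_combination_less[OF _ g]) auto
  with UR show "UR m \<pi> p f g a \<sigma> < receiver_bound p (gamma \<pi> ^ (m - 2))" by simp
qed

end

section \<open>Near-optimal chain protocols\<close>

text \<open>The memory states form a chain \<open>1, \<dots>, m\<close> whose ends are absorbing. From an inner state
  \<open>k\<close> the chain moves up only after the signal \<open>sh\<close> of largest likelihood ratio and down only
  after the signal \<open>sl\<close> of smallest ratio, with probabilities tuned to positive weights \<open>Q\<close> so
  that the probability of reaching the top from \<open>k\<close> is proportional to the sum of the weights
  below \<open>k\<close> for the high type, and of the weights multiplied by \<open>\<gamma> ^ (j - 1)\<close> for the low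
  type. The low type stops in the initial state \<open>2\<close>, where the action makes it indifferent,
  and the high type never stops.\<close>

lemma sum_of_bool_eq:
  fixes h :: "'a \<Rightarrow> 'b::semiring_1"
  assumes "finite S"
  shows "(\<Sum>j\<in>S. of_bool (j = a) * h j) = (if a \<in> S then h a else 0)"
proof -
  have "(\<Sum>j\<in>S. of_bool (j = a) * h j) = (\<Sum>j\<in>S. if j = a then h j else 0)"
    by (intro sum.cong) auto
  then show ?thesis using sum.delta[OF assms, of a h] by simp
qed

locale birth_death_chain =
  fixes \<pi> :: "theta \<Rightarrow> 's::finite \<Rightarrow> real" and m :: nat and sh sl :: 's and Q :: "nat \<Rightarrow> real"
  assumes pi_pos: "\<And>th s. 0 < \<pi> th s"
    and pi_sum: "\<And>th. (\<Sum>s\<in>UNIV. \<pi> th s) = 1"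
    and shsl: "sh \<noteq> sl" and m3: "3 \<le> m"
    and Qpos: "\<And>j. 0 < Q j"
    and gam_eq: "gamma \<pi> = (\<pi> H sh / \<pi> L sh) / (\<pi> H sl / \<pi> L sl)"
    and gam1: "1 < gamma \<pi>"
begin

definition odds_step :: "nat \<Rightarrow> real" where "odds_step k = (\<pi> H sh / \<pi> H sl) * (Q k / Q (k - 1))"
definition up_prob :: "nat \<Rightarrow> real" where "up_prob k = 1 / (1 + odds_step k)"
definition down_prob :: "nat \<Rightarrow> real" where "down_prob k = odds_step k / (1 + odds_step k)"
definition up_move :: "nat \<Rightarrow> 's \<Rightarrow> real" where "up_move k s = (if s = sh then up_prob k else 0)"
definition down_move :: "nat \<Rightarrow> 's \<Rightarrow> real"
  where "down_move k s = (if s = sl then down_prob k else 0)"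
definition inner :: "nat \<Rightarrow> bool" where "inner k \<longleftrightarrow> 2 \<le> k \<and> k \<le> m - 1"
definition chain_trans :: "nat \<Rightarrow> 's \<Rightarrow> nat \<Rightarrow> real" where
  "chain_trans k s j =
     (if inner k
      then up_move k s * of_bool (j = k + 1) + down_move k s * of_bool (j = k - 1)
           + (1 - up_move k s - down_move k s) * of_bool (j = k)
      else of_bool (j = k))"

lemma odds_step_pos: "0 < odds_step k" unfolding odds_step_def using pi_pos Qpos
  by (intro mult_pos_pos divide_pos_pos) auto
lemma up_prob_pos: "0 < up_prob k" "up_prob k \<le> 1" unfolding up_prob_def using odds_step_pos[of k]
  by auto
lemma down_prob_pos: "0 < down_prob k" "down_prob k \<le> 1" unfolding down_prob_def
  using odds_step_pos[of k] by auto
lemma down_prob_eq: "down_prob k = odds_step k * up_prob k" unfolding up_prob_def down_prob_def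
  by simp

lemma moves_bounds: "0 \<le> up_move k s" "0 \<le> down_move k s" "up_move k s + down_move k s \<le> 1"
  unfolding up_move_def down_move_def using up_prob_pos[of k] down_prob_pos[of k] shsl by auto

lemma chain_trans_nonneg: "0 \<le> chain_trans k s j"
  unfolding chain_trans_def of_bool_def using moves_bounds[of k s] by auto

lemma chain_trans_sum: "k \<in> {1..m} \<Longrightarrow> (\<Sum>j\<in>{1..m}. chain_trans k s j) = 1"
proof -
  assume k: "k \<in> {1..m}"
  show ?thesis
  proof (cases "inner k")
    case True
    then have r: "k + 1 \<in> {1..m}" "k - 1 \<in> {1..m}" "k \<in> {1..m}" unfolding inner_def using m3 by auto
    have "(\<Sum>j\<in>{1..m}. chain_trans k s j)
        = (\<Sum>j\<in>{1..m}. up_move k s * of_bool (j = k + 1)) +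
          (\<Sum>j\<in>{1..m}. down_move k s * of_bool (j = k - 1))
          + (\<Sum>j\<in>{1..m}. (1 - up_move k s - down_move k s) * of_bool (j = k))"
      unfolding chain_trans_def using True by (simp add: sum.distrib)
    also have "\<dots> = 1"
      using sum_of_bool_eq[of "{1..m}" "k + 1" "\<lambda>_. up_move k s"] sum_of_bool_eq[of "{1..m}" "k
          - 1" "\<lambda>_. down_move k s"]
        sum_of_bool_eq[of "{1..m}" k "\<lambda>_. 1 - up_move k s - down_move k s"] r
          by (simp add: mult.commute)
    finally show ?thesis .
  next
    case False
    then show ?thesis unfolding chain_trans_def using sum_of_bool_eq[of "{1..m}" k "\<lambda>_. 1"] k
      by simp
  qed
qed

sublocale memory_chain m \<pi> chain_trans
  by unfold_locales (rule pi_pos, rule pi_sum, rule chain_trans_nonneg, erule chain_trans_sum)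

lemma sum_signals_up_move: "(\<Sum>s\<in>UNIV. \<pi> th s * up_move k s) = \<pi> th sh * up_prob k"
  unfolding up_move_def by (simp add: if_distrib cong: if_cong)
lemma sum_signals_down_move: "(\<Sum>s\<in>UNIV. \<pi> th s * down_move k s) = \<pi> th sl * down_prob k"
  unfolding down_move_def by (simp add: if_distrib cong: if_cong)

lemma trans_prob_inner:
  assumes "inner k"
  shows "P th k j = \<pi> th sh * up_prob k * of_bool (j = k + 1)
           + \<pi> th sl * down_prob k * of_bool (j = k - 1)
           + (1 - \<pi> th sh * up_prob k - \<pi> th sl * down_prob k) * of_bool (j = k)"
proof -
  have "P th k j = (\<Sum>s\<in>UNIV. \<pi> th s * up_move k s) * of_bool (j = k + 1)
           + (\<Sum>s\<in>UNIV. \<pi> th s * down_move k s) * of_bool (j = k - 1)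
           + ((\<Sum>s\<in>UNIV. \<pi> th s) - (\<Sum>s\<in>UNIV. \<pi> th s * up_move k s)
              - (\<Sum>s\<in>UNIV. \<pi> th s * down_move k s)) * of_bool (j = k)"
    unfolding trans_prob_def chain_trans_def using assms
    by (simp add: algebra_simps sum.distrib sum_subtractf sum_distrib_left sum_distrib_right)
  then show ?thesis unfolding sum_signals_up_move sum_signals_down_move pi_sum .
qed

lemma absorbing_chain_iff: "absorbing chain_trans k \<longleftrightarrow> \<not> inner k"
proof
  assume a: "absorbing chain_trans k"
  show "\<not> inner k"
  proof
    assume i: "inner k"
    have "chain_trans k sh k = 1" using a unfolding absorbing_def by auto
    then have "1 - up_prob k = 1" unfolding chain_trans_def of_bool_def up_move_def down_move_def
      using i shsl by auto
    then show False using up_prob_pos[of k] by simp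
  qed
next
  assume "\<not> inner k" then show "absorbing chain_trans k"
    unfolding absorbing_def chain_trans_def of_bool_def by simp
qed

definition hit_weight :: "theta \<Rightarrow> nat \<Rightarrow> real" where
  "hit_weight th j = (if th = H then 1 else gamma \<pi> ^ (j - 1)) * Q j"
definition hit_total :: "theta \<Rightarrow> real" where "hit_total th = (\<Sum>j\<in>{1..<m}. hit_weight th j)"
definition hit_top :: "theta \<Rightarrow> nat \<Rightarrow> real"
  where "hit_top th k = (\<Sum>j\<in>{1..<k}. hit_weight th j) / hit_total th"

lemma gamma_pos: "0 < gamma \<pi>" unfolding gam_eq using pi_pos by (intro divide_pos_pos) auto

lemma hit_weight_pos: "0 < hit_weight th j" unfolding hit_weight_def using Qpos gamma_pos
  by (cases th) auto

lemma hit_total_pos: "0 < hit_total th" unfolding hit_total_def using hit_weight_pos m3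
  by (intro sum_pos) auto

text \<open>The probability flows up and down between neighbouring inner states balance, which makes
  \<open>hit_top\<close> harmonic.\<close>

lemma hit_weight_balance: assumes k: "2 \<le> k"
  shows "\<pi> th sh * hit_weight th k = \<pi> th sl * odds_step k * hit_weight th (k - 1)"
proof (cases th)
  case H
  have "Q (k - 1) \<noteq> 0" "\<pi> H sl \<noteq> 0" using Qpos[of "k - 1"] pi_pos[of H sl] by auto
  then show ?thesis unfolding hit_weight_def odds_step_def H by (simp add: field_simps)
next
  case L
  have e: "gamma \<pi> ^ (k - 1) = gamma \<pi> * gamma \<pi> ^ (k - 1 - 1)"
  proof -
    have "k - 1 = Suc (k - 1 - 1)" using k by simp
    then show ?thesis by (metis power_Suc)
  qed
  have nz: "Q (k - 1) \<noteq> 0" "\<pi> H sl \<noteq> 0" "\<pi> L sl \<noteq> 0" "\<pi> L sh \<noteq> 0" "\<pi> H sh \<noteq> 0"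
    using Qpos[of "k - 1"] pi_pos[of H sl] pi_pos[of L sl] pi_pos[of L sh] pi_pos[of H sh] by auto
  have "\<pi> L sh * gamma \<pi> = \<pi> L sl * (\<pi> H sh / \<pi> H sl)"
    unfolding gam_eq using nz by (simp add: field_simps)
  then show ?thesis unfolding hit_weight_def odds_step_def L e using nz by (simp add: field_simps)
qed

lemma hit_top_step: "1 \<le> k \<Longrightarrow> hit_top th (Suc k) - hit_top th k = hit_weight th k / hit_total th"
  unfolding hit_top_def by (simp add: diff_divide_distrib[symmetric])

lemma hit_top_harmonic: assumes k: "inner k"
  shows "(\<Sum>j\<in>{1..m}. P th k j * hit_top th j) = hit_top th k"
proof -
  have r: "k + 1 \<in> {1..m}" "k - 1 \<in> {1..m}" "k \<in> {1..m}" using k m3 unfolding inner_def by auto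
  define a1 where "a1 = \<pi> th sh * up_prob k"
  define b1 where "b1 = \<pi> th sl * down_prob k"
  have pj: "P th k j * hit_top th j
      = of_bool (j = k + 1) * (a1 * hit_top th j) + of_bool (j = k - 1) * (b1 * hit_top th j)
          + of_bool (j = k) * ((1 - a1 - b1) * hit_top th j)" for j
    unfolding trans_prob_inner[OF k] a1_def b1_def by (simp add: algebra_simps)
  have "(\<Sum>j\<in>{1..m}. P th k j * hit_top th j)
      = (\<Sum>j\<in>{1..m}. of_bool (j = k + 1) * (a1 * hit_top th j))
     + (\<Sum>j\<in>{1..m}. of_bool (j = k - 1) * (b1 * hit_top th j)) +
       (\<Sum>j\<in>{1..m}. of_bool (j = k) * ((1 - a1 - b1) * hit_top th j))"
    by (simp only: pj sum.distrib)
  also have "\<dots> = a1 * hit_top th (k + 1) + b1 * hit_top th (k - 1) + (1 - a1 - b1) * hit_top th k"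
    using r by (simp add: sum_of_bool_eq)
  also have "\<dots>
      = hit_top th k +
        (a1 * (hit_top th (Suc k) - hit_top th k) - b1 * (hit_top th k - hit_top th (k - 1)))"
    by (simp add: algebra_simps)
  also have "a1 * (hit_top th (Suc k) - hit_top th k) - b1 * (hit_top th k - hit_top th (k - 1))
      = 0"
  proof -
    have k2: "2 \<le> k" using k unfolding inner_def by simp
    have s1: "hit_top th (Suc k) - hit_top th k = hit_weight th k / hit_total th" using k2
      by (intro hit_top_step) simp
    have s2: "hit_top th k - hit_top th (k - 1) = hit_weight th (k - 1) / hit_total th"
    proof -
      have "k = Suc (k - 1)" using k2 by simp
      then have "hit_top th k - hit_top th (k - 1) = hit_top th (Suc (k - 1)) - hit_top th (k - 1)"
        by simp
      also have "\<dots> = hit_weight th (k - 1) / hit_total th" using k2 by (intro hit_top_step) simp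
      finally show ?thesis .
    qed
    have "a1 * hit_weight th k = b1 * hit_weight th (k - 1)"
      unfolding a1_def b1_def down_prob_eq using hit_weight_balance[OF k2, of th]
        by (simp add: algebra_simps)
    then show ?thesis unfolding s1 s2 by (simp add: diff_divide_distrib[symmetric] mult.commute)
  qed
  finally show ?thesis by simp
qed

lemma hit_top_bottom: "hit_top th 1 = 0" unfolding hit_top_def by simp
lemma hit_top_top: "hit_top th m = 1" unfolding hit_top_def hit_total_def using hit_total_pos[of th]
  unfolding hit_total_def by simp
lemma hit_top_bounds: "k \<le> m \<Longrightarrow> 0 \<le> hit_top th k \<and> hit_top th k \<le> 1"
proof -
  assume k: "k \<le> m"
  have a: "0 \<le> (\<Sum>j\<in>{1..<k}. hit_weight th j)" using hit_weight_pos
    by (intro sum_nonneg) (auto intro: less_imp_le)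
  have b: "(\<Sum>j\<in>{1..<k}. hit_weight th j) \<le> hit_total th" unfolding hit_total_def
    using k hit_weight_pos
    by (intro sum_mono2) (auto intro: less_imp_le)
  show ?thesis unfolding hit_top_def using a b hit_total_pos[of th] by auto
qed

lemma hit_top_two: "hit_top th 2 = Q 1 / hit_total th"
proof -
  have e: "{1..<2::nat} = {1}" by auto
  show ?thesis unfolding hit_top_def e hit_weight_def by simp
qed

lemma hit_total_H_le: "hit_total H \<le> hit_total L"
  unfolding hit_total_def hit_weight_def using Qpos gam1
  by (intro sum_mono) (auto intro!: one_le_power mult_right_mono less_imp_le[of 0])

lemma hit_top_two_L_le: "hit_top L 2 \<le> hit_top H 2"
  unfolding hit_top_two using hit_total_H_le hit_total_pos Qpos[of 1]
    by (intro divide_left_mono) (auto intro: less_imp_le mult_pos_pos)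

lemma no_closed_inner_class: assumes Z: "Z \<subseteq> {k. inner k}" "Z \<noteq> {}" shows "\<not> closed_class th Z"
proof
  assume cl: "closed_class th Z"
  have fin: "finite Z" by (rule finite_subset[of _ "{..m}"]) (use Z(1) in \<open>auto simp: inner_def\<close>)
  define k where "k = Min Z"
  have kZ: "k \<in> Z" unfolding k_def using fin Z(2) by simp
  have kmin: "\<And>j. j \<in> Z \<Longrightarrow> k \<le> j" unfolding k_def using fin by simp
  have ki: "inner k" using kZ Z(1) by auto
  have km: "k \<in> {1..m}" "k - 1 \<in> {1..m}" using ki m3 unfolding inner_def by auto
  have "P th k (k - 1) = \<pi> th sl * down_prob k" unfolding trans_prob_inner[OF ki] of_bool_def
    using ki unfolding inner_def by auto
  then have "0 < P th k (k - 1)" using pi_pos down_prob_pos by simp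
  then have "k - 1 \<in> Z" using cl kZ km unfolding closed_class_def by blast
  then have "k \<le> k - 1" using kmin by blast
  then show False using ki unfolding inner_def by arith
qed

definition chain_action :: "nat \<Rightarrow> real"
  where "chain_action k = (if k = m then 1 else if k = 2 then hit_top L 2 else 0)"
definition chain_init :: "nat \<Rightarrow> real" where "chain_init k = of_bool (k = 2)"
definition chain_strategy :: "nat \<Rightarrow> theta \<Rightarrow> real"
  where "chain_strategy k th = (if th = L \<and> k = 2 then 1 else 0)"

lemma two_state: "2 \<in> {1..m}" using m3 by auto

lemma chain_action_bounds: "x \<in> {1..m} \<Longrightarrow> 0 \<le> chain_action x \<and> chain_action x \<le> 1"
  unfolding chain_action_def using hit_top_bounds[of 2 L] m3 by auto

lemma chain_trans_sum_Suc: "Suc 0 \<le> i \<Longrightarrow> i \<le> m \<Longrightarrow> sum (chain_trans i s) {Suc 0..m} = 1"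
  using chain_trans_sum[of i s] by simp

lemma chain_valid_protocol: "valid_protocol m chain_trans chain_init chain_action"
  unfolding valid_protocol_def
proof (intro conjI ballI allI)
  show "(\<Sum>i\<in>{1..m}. chain_init i) = 1" unfolding chain_init_def
    using sum_of_bool_eq[of "{1..m}" 2 "\<lambda>_. 1"] two_state by simp
qed (auto simp: chain_trans_nonneg chain_trans_sum_Suc chain_action_bounds chain_init_def)

lemma chain_strategy_valid: "valid_strategy m chain_strategy"
  unfolding valid_strategy_def chain_strategy_def by auto

lemma chain_action_le_hit_top: "x \<in> {1..m} \<Longrightarrow> chain_action x \<le> hit_top th x"
proof -
  assume x: "x \<in> {1..m}"
  show ?thesis
  proof (cases "x = m")
    case True then show ?thesis unfolding chain_action_def using hit_top_top by simp
  next
    case False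
    show ?thesis
    proof (cases "x = 2")
      case True then show ?thesis unfolding chain_action_def using False hit_top_two_L_le
        by (cases th) auto
    next
      case False2: False
      then show ?thesis unfolding chain_action_def using False hit_top_bounds[of x th] x by auto
    qed
  qed
qed

lemma chain_payoff_theta: "payoff_theta m \<pi> chain_trans chain_init \<sigma> u th = payoff_from \<sigma> u th 2"
  unfolding payoff_theta_eq_sum chain_init_def
    using sum_of_bool_eq[of "{1..m}" 2 "\<lambda>x. payoff_from \<sigma> u th x"] two_state by simp

lemma hit_top_excessive: "x \<in> {1..m} \<Longrightarrow> \<not> absorbing chain_trans x
    \<Longrightarrow> (\<Sum>j\<in>{1..m}. P th x j * hit_top th j) \<le> hit_top th x"
  using hit_top_harmonic absorbing_chain_iff by simp

lemma chain_payoff_le: "valid_strategy m \<sigma>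
    \<Longrightarrow> payoff_theta m \<pi> chain_trans chain_init \<sigma> chain_action th \<le> hit_top th 2"
  unfolding chain_payoff_theta
  by (rule payoff_from_le_majorant[of \<sigma> chain_action "hit_top th" th 2])
    (use chain_action_bounds hit_top_bounds chain_action_le_hit_top hit_top_excessive two_state
      in auto)

lemma chain_payoff_strategy: "payoff_theta m \<pi> chain_trans chain_init chain_strategy chain_action th
    = hit_top th 2"
proof -
  define C where "C = {x\<in>{1..m}. \<not> absorbing chain_trans x \<and> chain_strategy x th = 0}"
  have s01: "\<And>x. x \<in> {1..m} \<Longrightarrow> chain_strategy x th = 0 \<or> chain_strategy x th = 1"
    unfolding chain_strategy_def by auto
  have Vle: "\<And>x. x \<in> {1..m} \<Longrightarrow> payoff_from chain_strategy chain_action th x \<le> hit_top th x"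
    by (rule payoff_from_le_majorant[of chain_strategy chain_action "hit_top th" th])
      (use chain_strategy_valid chain_action_bounds hit_top_bounds chain_action_le_hit_top
        hit_top_excessive in auto)
  have Voff: "\<And>x. x \<in> {1..m} \<Longrightarrow> x \<notin> C \<Longrightarrow> hit_top th x = chain_action x"
  proof -
    fix x assume x: "x \<in> {1..m}" and nC: "x \<notin> C"
    show "hit_top th x = chain_action x"
    proof (cases "absorbing chain_trans x")
      case True
      then have "\<not> inner x" using absorbing_chain_iff by simp
      then have "x = 1 \<or> x = m" using x unfolding inner_def by auto
      then show ?thesis unfolding chain_action_def using hit_top_bottom hit_top_top m3 by auto
    next
      case False
      then have "chain_strategy x th = 1" using nC x s01 unfolding C_def by auto
      then have "th = L" "x = 2" unfolding chain_strategy_def by (auto split: if_splits)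
      then show ?thesis unfolding chain_action_def using m3 by simp
    qed
  qed
  have Von: "\<And>x. x \<in> C \<Longrightarrow> hit_top th x = (\<Sum>j\<in>{1..m}. P th x j * hit_top th j)"
    using hit_top_harmonic absorbing_chain_iff unfolding C_def by auto
  have "(\<forall>x\<in>{1..m}. payoff_from chain_strategy chain_action th x = hit_top th x)
          \<or> (\<exists>Z. Z \<subseteq> C \<and> Z \<noteq> {} \<and> closed_class th Z)"
    by (rule payoff_from_eq_majorant[of chain_strategy chain_action th C "hit_top th",
          OF chain_strategy_valid chain_action_bounds s01 C_def Vle Voff Von])
  moreover have "\<not> (\<exists>Z. Z \<subseteq> C \<and> Z \<noteq> {} \<and> closed_class th Z)"
  proof
    assume "\<exists>Z. Z \<subseteq> C \<and> Z \<noteq> {} \<and> closed_class th Z"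
    then obtain Z where Z: "Z \<subseteq> C" "Z \<noteq> {}" "closed_class th Z" by blast
    have "Z \<subseteq> {k. inner k}" using Z(1) absorbing_chain_iff unfolding C_def by auto
    then show False using no_closed_inner_class Z by blast
  qed
  ultimately have "payoff_from chain_strategy chain_action th 2 = hit_top th 2" using two_state
    by blast
  then show ?thesis unfolding chain_payoff_theta .
qed

lemma chain_strategy_best_response: "0 \<le> p \<Longrightarrow> p \<le> 1
    \<Longrightarrow> chain_strategy \<in> br m \<pi> p chain_trans chain_init chain_action"
  unfolding br_def US_def
proof (intro CollectI conjI allI impI chain_strategy_valid)
  fix \<sigma>' assume p: "0 \<le> p" "p \<le> 1" and v: "valid_strategy m \<sigma>'"
  show "p * payoff_theta m \<pi> chain_trans chain_init \<sigma>' chain_action H + (1 - p)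
      * payoff_theta m \<pi> chain_trans chain_init \<sigma>' chain_action L
        \<le> p * payoff_theta m \<pi> chain_trans chain_init chain_strategy chain_action H + (1 - p) *
          payoff_theta m \<pi> chain_trans chain_init chain_strategy chain_action L"
    unfolding chain_payoff_strategy using chain_payoff_le[OF v, of H] chain_payoff_le[OF v, of L] p
    by (intro add_mono mult_left_mono) auto
qed

lemma UR_chain_strategy: "UR m \<pi> p chain_trans chain_init chain_action chain_strategy
    = p * hit_top H 2 + (1 - p) * (1 - hit_top L 2)"
proof -
  have "payoff_theta m \<pi> chain_trans chain_init chain_strategy (\<lambda>x. 1 - chain_action x) L
      = 1 - chain_action 2"
    unfolding chain_payoff_theta
    by (rule payoff_from_stop) (simp add: chain_strategy_def)
  then show ?thesis unfolding UR_def chain_payoff_strategy using m3 by (simp add: chain_action_def)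
qed

lemma hit_total_H_le_concentrated:
  fixes \<rho> \<eta> :: real
  assumes Q1: "Q 1 = 1" and Qtop: "Q (m - 1) = \<rho>" and \<eta>: "0 \<le> \<eta>"
    and Qmid: "\<And>j. 2 \<le> j \<Longrightarrow> j < m - 1 \<Longrightarrow> Q j \<le> \<eta>"
  shows "hit_total H \<le> 1 + \<rho> + real m * \<eta>"
proof -
  have "{1..<m} = insert 1 (insert (m - 1) {2..<m - 1})" using m3 by auto
  then have "hit_total H = Q 1 + Q (m - 1) + (\<Sum>j\<in>{2..<m - 1}. Q j)"
    unfolding hit_total_def hit_weight_def using m3 by simp
  also have "(\<Sum>j\<in>{2..<m - 1}. Q j) \<le> (\<Sum>j\<in>{2..<m - 1}. \<eta>)" using Qmid by (intro sum_mono) auto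
  also have "\<dots> \<le> real m * \<eta>" using \<eta> by (simp add: mult_right_mono)
  finally show ?thesis using Q1 Qtop by simp
qed

lemma hit_total_L_ge_ends:
  assumes Q1: "Q 1 = 1" and Qtop: "Q (m - 1) = \<rho>"
  shows "1 + \<rho> * gamma \<pi> ^ (m - 2) \<le> hit_total L"
proof -
  have "(\<Sum>j\<in>{1, m - 1}. hit_weight L j) \<le> hit_total L"
    unfolding hit_total_def using m3 hit_weight_pos by (intro sum_mono2) (auto intro: less_imp_le)
  moreover have "m - 1 - 1 = m - 2" by simp
  ultimately show ?thesis using m3 Q1 Qtop unfolding hit_weight_def by (simp add: mult.commute)
qed

end
section \<open>The optimal receiver payoff\<close>

lemma exists_less_of_sum_eq:
  fixes u v :: "'a::finite \<Rightarrow> real"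
  assumes "(\<Sum>s\<in>UNIV. u s) = (\<Sum>s\<in>UNIV. v s)" and "u \<noteq> v"
  shows "\<exists>s. u s < v s"
proof (rule ccontr)
  assume "\<not> (\<exists>s. u s < v s)"
  then have le: "\<forall>s. 0 \<le> u s - v s" by (simp add: not_less)
  have "(\<Sum>s\<in>UNIV. u s - v s) = 0" using assms(1) by (simp add: sum_subtractf)
  then have "\<forall>s. u s - v s = 0" using sum_nonneg_eq_0_iff[of UNIV "\<lambda>s. u s - v s"] le by simp
  then show False using assms(2) by auto
qed

lemma likelihood_ratio_extremes:
  fixes \<pi> :: "theta \<Rightarrow> 's::finite \<Rightarrow> real"
  assumes hpos: "\<forall>th s. 0 < \<pi> th s" and hsum: "\<forall>th. (\<Sum>s\<in>UNIV. \<pi> th s) = 1" and hne: "\<pi> H \<noteq> \<pi> L"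
  obtains sh sl where "\<pi> H sh / \<pi> L sh = lbar \<pi>" "\<pi> H sl / \<pi> L sl = lunder \<pi>"
    and "0 < lunder \<pi>" "1 < gamma \<pi>"
proof -
  have fin: "finite (range (\<lambda>s. \<pi> H s / \<pi> L s))" by simp
  have "lbar \<pi> \<in> range (\<lambda>s. \<pi> H s / \<pi> L s)" unfolding lbar_def using fin by (rule Max_in) simp
  then obtain sh where sh: "\<pi> H sh / \<pi> L sh = lbar \<pi>" by auto
  have "lunder \<pi> \<in> range (\<lambda>s. \<pi> H s / \<pi> L s)" unfolding lunder_def using fin by (rule Min_in) simp
  then obtain sl where sl: "\<pi> H sl / \<pi> L sl = lunder \<pi>" by auto
  have lu: "0 < lunder \<pi>" using sl[symmetric] hpos by simp
  obtain s1 where "\<pi> L s1 < \<pi> H s1" using exists_less_of_sum_eq[of "\<pi> L" "\<pi> H"] hsum hne by auto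
  then have "1 < \<pi> H s1 / \<pi> L s1" using hpos by simp
  also have "\<dots> \<le> lbar \<pi>" unfolding lbar_def using fin by (intro Max_ge) auto
  finally have lb: "1 < lbar \<pi>" .
  obtain s2 where "\<pi> H s2 < \<pi> L s2" using exists_less_of_sum_eq[of "\<pi> H" "\<pi> L"] hsum hne by auto
  then have "\<pi> H s2 / \<pi> L s2 < 1" using hpos by simp
  moreover have "lunder \<pi> \<le> \<pi> H s2 / \<pi> L s2" unfolding lunder_def using fin by (intro Min_le) auto
  ultimately have "1 < gamma \<pi>" unfolding gamma_def using lb lu by simp
  with sh sl lu show ?thesis by (rule that)
qed

lemma max_prior_in_UR_values:
  fixes \<pi> :: "theta \<Rightarrow> 's::finite \<Rightarrow> real"
  assumes hpos: "\<forall>th s. 0 < \<pi> th s" and hsum: "\<forall>th. (\<Sum>s\<in>UNIV. \<pi> th s) = 1" and m1: "1 \<le> m"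
    and p: "0 < p" "p < 1"
  shows "max p (1 - p) \<in> UR_values m \<pi> p"
proof -
  define f :: "nat \<Rightarrow> 's \<Rightarrow> nat \<Rightarrow> real" where "f i s j = of_bool (j = i)" for i s j
  define g :: "nat \<Rightarrow> real" where "g i = of_bool (i = 1)" for i
  define a :: "nat \<Rightarrow> real" where "a i = of_bool (1/2 \<le> p)" for i
  define \<sigma> :: "nat \<Rightarrow> theta \<Rightarrow> real" where "\<sigma> i t = 0" for i t
  have vp: "valid_protocol m f g a"
    unfolding valid_protocol_def f_def g_def a_def
      using m1 sum_of_bool_eq[of "{1..m}" _ "\<lambda>_. 1::real"]
    by auto
  interpret memory_chain m \<pi> f
    by unfold_locales
      (use hpos hsum sum_of_bool_eq[of "{1..m}" _ "\<lambda>_. 1::real"] in \<open>auto simp: f_def\<close>)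
  have pay: "payoff_theta m \<pi> f g \<sigma>' u th = u 1" for \<sigma>' u th
  proof -
    have "absorbing f x" for x unfolding absorbing_def f_def by simp
    then have "payoff_theta m \<pi> f g \<sigma>' u th = (\<Sum>x\<in>{1..m}. g x * u x)"
      unfolding payoff_theta_eq_sum using payoff_from_stop by simp
    also have "\<dots> = u 1" unfolding g_def using m1 sum_of_bool_eq[of "{1..m}" 1 u] by simp
    finally show ?thesis .
  qed
  have "\<sigma> \<in> br m \<pi> p f g a" unfolding br_def US_def pay valid_strategy_def \<sigma>_def by simp
  moreover have "UR m \<pi> p f g a \<sigma> = max p (1 - p)" unfolding UR_def pay a_def by auto
  ultimately show ?thesis using vp unfolding UR_values_def by force
qed

lemma two_point_value_approx:
  fixes p \<rho> c M \<eta> \<delta> ZH ZL :: real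
  assumes p: "0 < p" "p < 1" and \<rho>: "0 < \<rho>" and c: "0 < c" and \<eta>: "0 \<le> M * \<eta>" "p * (M * \<eta>) < \<delta>"
    and ZH: "0 < ZH" "ZH \<le> 1 + \<rho> + M * \<eta>" and ZL: "1 + \<rho> * c \<le> ZL"
  shows "p / (1 + \<rho>) + (1 - p) * (1 - 1 / (1 + \<rho> * c)) - \<delta> < p / ZH + (1 - p) * (1 - 1 / ZL)"
proof -
  have "p / (1 + \<rho> + M * \<eta>) \<le> p / ZH" using ZH p by (intro divide_left_mono) auto
  moreover have "0 < 1 + \<rho> * c" using \<rho> c by (simp add: add_pos_pos)
  then have "1 / ZL \<le> 1 / (1 + \<rho> * c)" using ZL by (intro divide_left_mono) auto
  then have "(1 - p) * (1 - 1 / (1 + \<rho> * c)) \<le> (1 - p) * (1 - 1 / ZL)" using p by simp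
  moreover have "p / (1 + \<rho>) - p / (1 + \<rho> + M * \<eta>) \<le> p * (M * \<eta>)"
  proof -
    have "p / (1 + \<rho>) - p / (1 + \<rho> + M * \<eta>) = p * (M * \<eta>) / ((1 + \<rho>) * (1 + \<rho> + M * \<eta>))"
      using \<rho> \<eta> by (simp add: field_simps)
    also have "\<dots> \<le> p * (M * \<eta>) / 1"
      using p \<rho> \<eta> mult_mono[of 1 "1 + \<rho>" 1 "1 + \<rho> + M * \<eta>"] by (intro divide_left_mono) auto
    finally show ?thesis by simp
  qed
  ultimately show ?thesis using \<eta> by linarith
qed

lemma UR_values_approx:
  fixes \<pi> :: "theta \<Rightarrow> 's::finite \<Rightarrow> real"
  assumes hpos: "\<forall>th s. 0 < \<pi> th s" and hsum: "\<forall>th. (\<Sum>s\<in>UNIV. \<pi> th s) = 1"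
    and p: "0 < p" "p < 1" and gam: "1 < gamma \<pi>" and lu: "0 < lunder \<pi>"
    and sh: "\<pi> H sh / \<pi> L sh = lbar \<pi>" and sl: "\<pi> H sl / \<pi> L sl = lunder \<pi>"
    and m3: "3 \<le> m" and ck: "kappa p < gamma \<pi> ^ (m - 2)" and \<delta>: "0 < \<delta>"
  shows "\<exists>y\<in>UR_values m \<pi> p. receiver_bound p (gamma \<pi> ^ (m - 2)) - \<delta> < y"
proof -
  define c where "c = gamma \<pi> ^ (m - 2)"
  obtain \<rho> where \<rho>: "0 < \<rho>"
    and B: "p / (1 + \<rho>) + (1 - p) * (1 - 1 / (1 + \<rho> * c)) = receiver_bound p c"
    using receiver_bound_two_point[OF p ck[folded c_def]] by blast
  define X where "X = p * \<rho> * m"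
  have X: "0 \<le> X" unfolding X_def using p \<rho> by simp
  define \<epsilon> where "\<epsilon> = min (1/2) (\<delta> / (X + 1))"
  have \<epsilon>: "0 < \<epsilon>" "\<epsilon> \<le> 1" "X * \<epsilon> < \<delta>"
  proof -
    show "0 < \<epsilon>" "\<epsilon> \<le> 1" unfolding \<epsilon>_def using \<delta> X by auto
    have "X * \<epsilon> \<le> X * (\<delta> / (X + 1))" unfolding \<epsilon>_def using X by (intro mult_left_mono) auto
    also have "\<dots> < \<delta>" using X \<delta> by (simp add: field_simps)
    finally show "X * \<epsilon> < \<delta>" .
  qed
  define Q where "Q j = (if j \<le> 1 then 1 else \<rho> * \<epsilon> ^ (m - 1 - j))" for j
  have "sh \<noteq> sl" using sh sl gam lu unfolding gamma_def by auto
  moreover have "gamma \<pi> = (\<pi> H sh / \<pi> L sh) / (\<pi> H sl / \<pi> L sl)" unfolding gamma_def sh sl ..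
  ultimately interpret birth_death_chain \<pi> m sh sl Q
    by unfold_locales (use hpos hsum m3 gam \<rho> \<epsilon> in \<open>auto simp: Q_def\<close>)
  have Qmid: "Q j \<le> \<rho> * \<epsilon>" if "2 \<le> j" "j < m - 1" for j
    using that \<rho> \<epsilon> power_decreasing[of 1 "m - 1 - j" \<epsilon>] unfolding Q_def by simp
  have Q: "Q 1 = 1" "Q (m - 1) = \<rho>" unfolding Q_def using m3 by auto
  have UR: "UR m \<pi> p chain_trans chain_init chain_action chain_strategy
          = p / hit_total H + (1 - p) * (1 - 1 / hit_total L)"
    unfolding UR_chain_strategy hit_top_two Q_def by simp
  have "receiver_bound p c - \<delta> < p / hit_total H + (1 - p) * (1 - 1 / hit_total L)"
    unfolding B[symmetric]
  proof (rule two_point_value_approx[OF p \<rho> _ _ _ hit_total_pos])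
    show "0 < c" unfolding c_def using gam by simp
    show "0 \<le> real m * (\<rho> * \<epsilon>)" "p * (real m * (\<rho> * \<epsilon>)) < \<delta>"
      using \<rho> \<epsilon> unfolding X_def by (simp_all add: mult_ac)
    show "hit_total H \<le> 1 + \<rho> + real m * (\<rho> * \<epsilon>)"
      using hit_total_H_le_concentrated[OF Q _ Qmid] \<rho> \<epsilon> by simp
    show "1 + \<rho> * c \<le> hit_total L" unfolding c_def using hit_total_L_ge_ends[OF Q] .
  qed
  moreover have "chain_strategy \<in> br m \<pi> p chain_trans chain_init chain_action"
    using p by (intro chain_strategy_best_response) auto
  then have "UR m \<pi> p chain_trans chain_init chain_action chain_strategy \<in> UR_values m \<pi> p"
    unfolding UR_values_def using chain_valid_protocol by blast
  ultimately show ?thesis unfolding c_def UR by blast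
qed

lemma UR_values_le_receiver_bound:
  fixes \<pi> :: "theta \<Rightarrow> 's::finite \<Rightarrow> real"
  assumes p: "0 < p" "p < 1" and hpos: "\<forall>th s. 0 < \<pi> th s" and hsum: "\<forall>th. (\<Sum>s\<in>UNIV. \<pi> th s) = 1"
    and gam: "1 < gamma \<pi>" and lu: "0 < lunder \<pi>" and m: "2 \<le> m" and y: "y \<in> UR_values m \<pi> p"
  shows "y \<le> receiver_bound p (gamma \<pi> ^ (m - 2))"
    and "4 \<le> m \<Longrightarrow> kappa p < gamma \<pi> ^ (m - 2) \<Longrightarrow> y < receiver_bound p (gamma \<pi> ^ (m - 2))"
proof -
  obtain f g a \<sigma> where y: "y = UR m \<pi> p f g a \<sigma>" and vp: "valid_protocol m f g a"
    and sb: "\<sigma> \<in> br m \<pi> p f g a"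
    using y unfolding UR_values_def by blast
  interpret memory_chain m \<pi> f
    by unfold_locales (use hpos hsum vp in \<open>auto simp: valid_protocol_def\<close>)
  show "y \<le> receiver_bound p (gamma \<pi> ^ (m - 2))"
    "4 \<le> m \<Longrightarrow> kappa p < gamma \<pi> ^ (m - 2) \<Longrightarrow> y < receiver_bound p (gamma \<pi> ^ (m - 2))"
    unfolding y using UR_le_receiver_bound[OF p gam lu m vp sb] by auto
qed

lemma Sup_UR_values:
  fixes \<pi> :: "theta \<Rightarrow> 's::finite \<Rightarrow> real"
  assumes p: "0 < p" "p < 1" and hpos: "\<forall>th s. 0 < \<pi> th s" and hsum: "\<forall>th. (\<Sum>s\<in>UNIV. \<pi> th s) = 1"
    and hne: "\<pi> H \<noteq> \<pi> L" and m: "2 \<le> m"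
  shows "Sup (UR_values m \<pi> p) = receiver_bound p (gamma \<pi> ^ (m - 2))"
    and "4 \<le> m \<Longrightarrow> kappa p < gamma \<pi> ^ (m - 2) \<Longrightarrow> y \<in> UR_values m \<pi> p \<Longrightarrow>
           y < receiver_bound p (gamma \<pi> ^ (m - 2))"
proof -
  obtain sh sl where sh: "\<pi> H sh / \<pi> L sh = lbar \<pi>" and sl: "\<pi> H sl / \<pi> L sl = lunder \<pi>"
    and lu: "0 < lunder \<pi>" and gam: "1 < gamma \<pi>"
    using likelihood_ratio_extremes[OF hpos hsum hne] by blast
  define B where "B = receiver_bound p (gamma \<pi> ^ (m - 2))"
  note upper = UR_values_le_receiver_bound[OF p hpos hsum gam lu m, folded B_def]
  then show "4 \<le> m \<Longrightarrow> kappa p < gamma \<pi> ^ (m - 2) \<Longrightarrow> y \<in> UR_values m \<pi> p \<Longrightarrow> y < B"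
    by blast
  have max_prior: "max p (1 - p) \<in> UR_values m \<pi> p"
    using max_prior_in_UR_values[OF hpos hsum _ p] m by simp
  show "Sup (UR_values m \<pi> p) = B"
  proof (cases "kappa p < gamma \<pi> ^ (m - 2)")
    case True
    have "m \<noteq> 2" using True one_le_kappa[OF p] by auto
    then have m3: "3 \<le> m" using m by simp
    show ?thesis
    proof (rule cSup_eq_non_empty)
      fix z assume ub: "\<And>y. y \<in> UR_values m \<pi> p \<Longrightarrow> y \<le> z"
      show "B \<le> z"
      proof (rule ccontr)
        assume "\<not> B \<le> z"
        then obtain y where "y \<in> UR_values m \<pi> p" "B - (B - z) < y"
          using UR_values_approx[OF hpos hsum p gam lu sh sl m3 True, of "B - z"]
          unfolding B_def by auto
        then show False using ub by fastforce
      qed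
    qed (use max_prior upper(1) in auto)
  next
    case False
    then have "B = max p (1 - p)" unfolding B_def receiver_bound_def by simp
    then show ?thesis using max_prior upper(1) by (intro cSup_eq_maximum) auto
  qed
qed

theorem theorem2:
  fixes \<pi> :: "theta \<Rightarrow> 's::finite \<Rightarrow> real" and p :: real and m :: nat
  assumes hp: "0 < p" "p < 1"
    and hpos: "\<forall>th s. 0 < \<pi> th s"
    and hsum: "\<forall>th. (\<Sum>s\<in>UNIV. \<pi> th s) = 1"
    and hne: "\<pi> H \<noteq> \<pi> L"
    and hm: "2 \<le> m"
  shows "Sup (UR_values m \<pi> p) =
           (if gamma \<pi> ^ (m - 2) > kappa p
            then 1 - (2 * sqrt (p * (1 - p) * gamma \<pi> ^ (m - 2)) - 1) / (gamma \<pi> ^ (m - 2) - 1)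
            else max p (1 - p))
         \<and> (4 \<le> m \<and> gamma \<pi> ^ (m - 2) > kappa p \<longrightarrow>
             \<not> (\<exists>f g a \<sigma>. valid_protocol m f g a \<and> \<sigma> \<in> br m \<pi> p f g a \<and>
                   UR m \<pi> p f g a \<sigma> = Sup (UR_values m \<pi> p)))"
proof -
  note Sup = Sup_UR_values[OF hp hpos hsum hne hm]
  have "UR m \<pi> p f g a \<sigma> \<in> UR_values m \<pi> p" if "valid_protocol m f g a" "\<sigma> \<in> br m \<pi> p f g a"
    for f g a \<sigma>
    using that unfolding UR_values_def by blast
  with Sup(2) have "UR m \<pi> p f g a \<sigma> \<noteq> Sup (UR_values m \<pi> p)"
    if "4 \<le> m" "kappa p < gamma \<pi> ^ (m - 2)" "valid_protocol m f g a" "\<sigma> \<in> br m \<pi> p f g a"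
    for f g a \<sigma>
    using that unfolding Sup(1) by (metis order_less_irrefl)
  then show ?thesis using Sup(1) unfolding receiver_bound_def by blast
qed

end
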